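(* Let $F$ be an algebraically closed field with $\operatorname{char}F=2$, $R=F[[x,y]]$, and let $f\in R^2$ be such that $j_3(f)$ is contact equivalent to one of $(x^3,\,y^3+x^2y)$, $(x^3,\,y^3)$, $(x^3+x^2y,\,y^3+\lambda x^2y)$ with $\lambda\neq 1$, $(x^2y,\,x^3+y^3)$. Then $j_3(f)$ is $3$-determined. In particular $f$ is contact equivalent to the corresponding one of these forms.
   Context: $\mathfrak m=\langle x,y\rangle$, $j_3(f)$ is the image of $f$ in $R^2/\mathfrak m^4R^2$. Contact equivalence: $g=U\cdot\phi(f)$ with $U\in GL(2,R)$, $\phi\in\operatorname{Aut}(R)$. An element $h$ is $k$-determined if every $g\in R^2$ with $j_k(g)=j_k(h)$ is contact equivalent to $h$. *)

theory Defs
  imports "HOL-Computational_Algebra.Polynomial"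
begin

text \<open>R = F[[x,y]]: a formal power series is its coefficient function;
  coefficient of x^i y^j is f (i,j). Every such function is a power series.\<close>
type_synonym 'a ps2 = "nat \<times> nat \<Rightarrow> 'a"

definition ps_const :: "'a::comm_ring_1 \<Rightarrow> 'a ps2" where
  "ps_const c = (\<lambda>(i,j). if i = 0 \<and> j = 0 then c else 0)"

definition ps_mon :: "'a::comm_ring_1 \<Rightarrow> nat \<Rightarrow> nat \<Rightarrow> 'a ps2" where
  "ps_mon c a b = (\<lambda>(i,j). if i = a \<and> j = b then c else 0)"

definition ps_add :: "'a::comm_ring_1 ps2 \<Rightarrow> 'a ps2 \<Rightarrow> 'a ps2" (infixl "+\<^sub>p" 65) where
  "ps_add f g = (\<lambda>k. f k + g k)"

definition ps_sub :: "'a::comm_ring_1 ps2 \<Rightarrow> 'a ps2 \<Rightarrow> 'a ps2" (infixl "-\<^sub>p" 65) where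
  "ps_sub f g = (\<lambda>k. f k - g k)"

definition ps_mul :: "'a::comm_ring_1 ps2 \<Rightarrow> 'a ps2 \<Rightarrow> 'a ps2" (infixl "*\<^sub>p" 70) where
  "ps_mul f g = (\<lambda>(i,j). \<Sum>a\<le>i. \<Sum>b\<le>j. f (a,b) * g (i - a, j - b))"

definition ps_unit :: "'a::comm_ring_1 ps2 \<Rightarrow> bool" where
  "ps_unit u \<longleftrightarrow> (\<exists>v. u *\<^sub>p v = ps_const 1)"

definition is_aut :: "('a::comm_ring_1 ps2 \<Rightarrow> 'a ps2) \<Rightarrow> bool" where
  "is_aut \<phi> \<longleftrightarrow> bij \<phi> \<and> (\<forall>f g. \<phi> (f +\<^sub>p g) = \<phi> f +\<^sub>p \<phi> g)
     \<and> (\<forall>f g. \<phi> (f *\<^sub>p g) = \<phi> f *\<^sub>p \<phi> g) \<and> (\<forall>c. \<phi> (ps_const c) = ps_const c)"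

type_synonym 'a mat2 = "('a ps2 \<times> 'a ps2) \<times> ('a ps2 \<times> 'a ps2)"

definition in_GL2 :: "'a::comm_ring_1 mat2 \<Rightarrow> bool" where
  "in_GL2 U = (case U of ((u11,u12),(u21,u22)) \<Rightarrow>
     ps_unit (u11 *\<^sub>p u22 -\<^sub>p u12 *\<^sub>p u21))"

definition mat_app :: "'a::comm_ring_1 mat2 \<Rightarrow> 'a ps2 \<times> 'a ps2 \<Rightarrow> 'a ps2 \<times> 'a ps2" where
  "mat_app U f = (case U of ((u11,u12),(u21,u22)) \<Rightarrow>
     (u11 *\<^sub>p fst f +\<^sub>p u12 *\<^sub>p snd f, u21 *\<^sub>p fst f +\<^sub>p u22 *\<^sub>p snd f))"

definition contact_equiv :: "'a::comm_ring_1 ps2 \<times> 'a ps2 \<Rightarrow> 'a ps2 \<times> 'a ps2 \<Rightarrow> bool" where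
  "contact_equiv f g \<longleftrightarrow> (\<exists>U \<phi>. in_GL2 U \<and> is_aut \<phi> \<and> g = mat_app U (\<phi> (fst f), \<phi> (snd f)))"

text \<open>k-jet: image in R^2/m^(k+1) R^2, represented by the truncation (terms of degree \<le> k).\<close>
definition ps_jet :: "nat \<Rightarrow> 'a::comm_ring_1 ps2 \<Rightarrow> 'a ps2" where
  "ps_jet k f = (\<lambda>(i,j). if i + j \<le> k then f (i,j) else 0)"

definition jet :: "nat \<Rightarrow> 'a::comm_ring_1 ps2 \<times> 'a ps2 \<Rightarrow> 'a ps2 \<times> 'a ps2" where
  "jet k f = (ps_jet k (fst f), ps_jet k (snd f))"

definition determined :: "nat \<Rightarrow> 'a::comm_ring_1 ps2 \<times> 'a ps2 \<Rightarrow> bool" where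
  "determined k h \<longleftrightarrow> (\<forall>g. jet k g = jet k h \<longrightarrow> contact_equiv g h)"

definition alg_closed :: "'a::field itself \<Rightarrow> bool" where
  "alg_closed _ \<longleftrightarrow> (\<forall>p :: 'a poly. degree p > 0 \<longrightarrow> (\<exists>x. poly p x = 0))"

end

theory Submission
  imports Defs "HOL-Computational_Algebra.Formal_Power_Series" "HOL-Library.Product_Plus"
begin

(* Let m be the maximal ideal of R = F[[x,y]]. Each normal form N is a pair of cubic forms, and
   every g = N mod m^4 is brought to the form g = U * N(P), with U = 1 mod m and P = (x, y) mod m^2,
   by a Newton iteration in the m-adic topology: if the residual r = g - U * N(P) has order k >= 4
   and lies, modulo m^(k+1), in m^(k-3) N + J m^(k-2), where J is the Jacobian matrix of N, then
   the corresponding corrections of U and P raise the order of the residual, by Taylor expansion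
   of N at (x, y). The corrections converge m-adically, and P defines an automorphism of R.
   In characteristic 2 the Jacobians of the four normal forms are nearly monomial, and the tangent
   space condition is verified monomial by monomial; for (x^3 + x^2 y, y^3 + lam x^2 y) it needs
   1 + lam to be invertible, i.e. lam ~= 1. Determinacy is invariant under contact equivalence,
   which carries it from N over to j_3(f). *)

unbundle fps_syntax

section \<open>Bivariate power series and their order\<close>

(* F $ i $ j is the coefficient of x^i y^j in F :: 'a bps. *)
type_synonym 'a bps = "'a fps fps"

definition bcoeff :: "'a::comm_ring_1 bps \<Rightarrow> nat \<Rightarrow> nat \<Rightarrow> 'a" where
  "bcoeff F i j = F $ i $ j"

definition Abs_bps :: "(nat \<Rightarrow> nat \<Rightarrow> 'a::comm_ring_1) \<Rightarrow> 'a bps" where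
  "Abs_bps c = Abs_fps (\<lambda>i. Abs_fps (c i))"

definition bconst :: "'a::comm_ring_1 \<Rightarrow> 'a bps" where
  "bconst c = fps_const (fps_const c)"

definition bX :: "'a::comm_ring_1 bps" where
  "bX = fps_X"

definition bY :: "'a::comm_ring_1 bps" where
  "bY = fps_const fps_X"

definition bmonom :: "nat \<Rightarrow> nat \<Rightarrow> 'a::comm_ring_1 bps" where
  "bmonom i j = bX ^ i * bY ^ j"

lemma bcoeff_Abs_bps [simp]: "bcoeff (Abs_bps c) i j = c i j"
  by (simp add: bcoeff_def Abs_bps_def)

lemma bps_eqI: "(\<And>i j. bcoeff F i j = bcoeff G i j) \<Longrightarrow> F = G"
  by (simp add: bcoeff_def fps_ext)

lemma bcoeff_add [simp]: "bcoeff (F + G) i j = bcoeff F i j + bcoeff G i j"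
  and bcoeff_diff [simp]: "bcoeff (F - G) i j = bcoeff F i j - bcoeff G i j"
  and bcoeff_minus [simp]: "bcoeff (- F) i j = - bcoeff F i j"
  and bcoeff_0 [simp]: "bcoeff 0 i j = 0"
  by (simp_all add: bcoeff_def)

lemma bcoeff_sum: "bcoeff (sum f A) i j = (\<Sum>x\<in>A. bcoeff (f x) i j)"
  by (induct A rule: infinite_finite_induct) (auto simp: bcoeff_def)

lemma bcoeff_mult:
  "bcoeff (F * G) i j = (\<Sum>a\<le>i. \<Sum>b\<le>j. bcoeff F a b * bcoeff G (i - a) (j - b))"
  by (simp add: bcoeff_def fps_mult_nth fps_sum_nth atLeast0AtMost)

lemma bcoeff_bconst: "bcoeff (bconst c) i j = (if i = 0 \<and> j = 0 then c else 0)"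
  by (simp add: bcoeff_def bconst_def)

lemma bcoeff_1: "bcoeff 1 i j = (if i = 0 \<and> j = 0 then 1 else 0)"
  by (simp add: bcoeff_def fps_one_nth)

lemma bcoeff_bconst_mult [simp]: "bcoeff (bconst c * F) i j = c * bcoeff F i j"
  by (simp add: bcoeff_def bconst_def)

lemma bconst_add: "bconst (a + b) = bconst a + bconst b"
  and bconst_mult: "bconst (a * b) = bconst a * bconst b"
  and bconst_0 [simp]: "bconst 0 = 0"
  and bconst_1 [simp]: "bconst 1 = 1"
  and bconst_numeral [simp]: "bconst (numeral n) = numeral n"
  by (simp_all add: bconst_def fps_numeral_fps_const)

lemma bconst_sum: "bconst (sum f A) = (\<Sum>x\<in>A. bconst (f x))"
  by (induct A rule: infinite_finite_induct) (auto simp: bconst_add)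

lemma bcoeff_bX_power_mult: "bcoeff (bX ^ a * F) i j = (if a \<le> i then bcoeff F (i - a) j else 0)"
  by (simp add: bcoeff_def bX_def fps_X_power_mult_nth)

lemma bcoeff_bY_power_mult: "bcoeff (bY ^ b * F) i j = (if b \<le> j then bcoeff F i (j - b) else 0)"
  by (simp add: bcoeff_def bY_def fps_X_power_mult_nth)

lemma bcoeff_bmonom: "bcoeff (bmonom a b) i j = (if i = a \<and> j = b then 1 else 0)"
proof -
  have "bcoeff (bX ^ a * (bY ^ b * 1)) i j = (if i = a \<and> j = b then 1 else 0)"
    by (simp add: bcoeff_bX_power_mult bcoeff_bY_power_mult bcoeff_1 del: mult_1_right)
  then show ?thesis by (simp add: bmonom_def)
qed

lemma bX_eq_bmonom: "bX = bmonom 1 0" and bY_eq_bmonom: "bY = bmonom 0 1"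
  by (simp_all add: bmonom_def)

lemma bmonom_mult: "bmonom a b * bmonom c d = bmonom (a + c) (b + d)"
  by (simp add: bmonom_def power_add algebra_simps)

lemma fps_dvd_one_iff: "(f :: 'a::comm_ring_1 fps) dvd 1 \<longleftrightarrow> f $ 0 dvd 1"
proof
  assume "f dvd 1"
  then obtain g where "1 = f * g" by (auto elim: dvdE)
  then have "1 = f $ 0 * g $ 0" by (metis fps_mult_nth_0 fps_one_nth)
  then show "f $ 0 dvd 1" by (rule dvdI)
next
  assume "f $ 0 dvd 1"
  then obtain y where "1 = f $ 0 * y" by (auto elim: dvdE)
  then have "f * fps_right_inverse f y = 1" by (intro fps_right_inverse) simp
  then show "f dvd 1" by (metis dvdI)
qed

lemma bps_dvd_one_iff: "F dvd 1 \<longleftrightarrow> bcoeff F 0 0 dvd 1"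
  by (simp add: bcoeff_def fps_dvd_one_iff)

definition ord_ge :: "nat \<Rightarrow> 'a::comm_ring_1 bps \<Rightarrow> bool" where
  "ord_ge k F \<longleftrightarrow> (\<forall>i j. i + j < k \<longrightarrow> bcoeff F i j = 0)"

lemma ord_ge_0 [simp]: "ord_ge 0 F"
  and ord_ge_zero [simp]: "ord_ge k 0"
  by (simp_all add: ord_ge_def)

lemma ord_ge_1_iff: "ord_ge (Suc 0) F \<longleftrightarrow> bcoeff F 0 0 = 0"
  by (simp add: ord_ge_def)

lemma ord_ge_mono: "ord_ge k F \<Longrightarrow> j \<le> k \<Longrightarrow> ord_ge j F"
  by (auto simp: ord_ge_def)

lemma ord_ge_add: "ord_ge k F \<Longrightarrow> ord_ge k G \<Longrightarrow> ord_ge k (F + G)"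
  and ord_ge_diff: "ord_ge k F \<Longrightarrow> ord_ge k G \<Longrightarrow> ord_ge k (F - G)"
  and ord_ge_uminus: "ord_ge k F \<Longrightarrow> ord_ge k (- F)"
  by (auto simp: ord_ge_def)

lemma ord_ge_sum: "(\<And>x. x \<in> A \<Longrightarrow> ord_ge k (f x)) \<Longrightarrow> ord_ge k (sum f A)"
  by (auto simp: ord_ge_def bcoeff_sum intro!: sum.neutral)

lemma ord_ge_mult:
  assumes F: "ord_ge a F" and G: "ord_ge b G" and k: "k \<le> a + b"
  shows "ord_ge k (F * G)"
  unfolding ord_ge_def bcoeff_mult
proof (intro allI impI sum.neutral ballI)
  fix i j c d assume "i + j < k" "c \<in> {..i}" "d \<in> {..j}"
  then show "bcoeff F c d * bcoeff G (i - c) (j - d) = 0"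
    using F G k by (cases "c + d < a") (auto simp: ord_ge_def)
qed

lemma ord_ge_mult_left: "ord_ge k F \<Longrightarrow> ord_ge k (s * F)"
  using ord_ge_mult[of 0 s k F k] by simp

lemma ord_ge_power: "ord_ge a F \<Longrightarrow> k \<le> a * n \<Longrightarrow> ord_ge k (F ^ n)"
proof (induct n arbitrary: k)
  case (Suc n)
  then show ?case unfolding power_Suc by (intro ord_ge_mult[of a F "a * n"]) auto
qed (simp add: ord_ge_def)

lemma ord_ge_mult_diff:
  assumes "ord_ge k (A - A')" "ord_ge k (B - B')"
  shows "ord_ge k (A * B - A' * B')"
proof -
  have "A * B - A' * B' = (A - A') * B + A' * (B - B')" by (simp add: algebra_simps)
  then show ?thesis
    using assms by (metis ord_ge_add ord_ge_mult_left mult.commute)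
qed

lemma ord_ge_bmonom: "k \<le> i + j \<Longrightarrow> ord_ge k (bmonom i j)"
  by (auto simp: ord_ge_def bcoeff_bmonom)

lemma ord_ge_bX [simp]: "ord_ge (Suc 0) bX" and ord_ge_bY [simp]: "ord_ge (Suc 0) bY"
  by (simp_all add: bX_eq_bmonom bY_eq_bmonom ord_ge_bmonom)

lemma ord_ge_eqI: "(\<And>k. ord_ge k (F - G)) \<Longrightarrow> F = G"
  by (rule bps_eqI) (auto simp: ord_ge_def)

lemma ord_ge_Suc_decomp:
  assumes "ord_ge (Suc k) F"
  obtains A B where "F = bX * A + bY * B" "ord_ge k A" "ord_ge k B"
proof
  define A where "A = Abs_bps (\<lambda>i j. bcoeff F (i + 1) j)"
  define B where "B = Abs_bps (\<lambda>i j. if i = 0 then bcoeff F 0 (j + 1) else 0)"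
  show "F = bX * A + bY * B"
  proof (rule bps_eqI)
    fix i j
    show "bcoeff F i j = bcoeff (bX * A + bY * B) i j"
      using assms bcoeff_bX_power_mult[of 1 A i j] bcoeff_bY_power_mult[of 1 B i j]
      by (cases i; cases j) (auto simp: A_def B_def ord_ge_def)
  qed
  show "ord_ge k A" "ord_ge k B" using assms by (auto simp: ord_ge_def A_def B_def)
qed

lemma ord_ge_cauchy_limit:
  assumes cauchy: "\<And>m. ord_ge m (s (Suc m) - s m)"
  obtains L where "\<And>m. ord_ge m (L - s m)"
proof
  have tail: "ord_ge m (s m' - s m)" if "m \<le> m'" for m m'
    using that
  proof (induct m' rule: dec_induct)
    case (step n)
    have "s (Suc n) - s m = (s (Suc n) - s n) + (s n - s m)" by simp
    then show ?case using step ord_ge_mono[OF cauchy[of n]] by (metis ord_ge_add)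
  qed simp
  define L where "L = Abs_bps (\<lambda>i j. bcoeff (s (i + j + 1)) i j)"
  show "ord_ge m (L - s m)" for m
    unfolding ord_ge_def
  proof (intro allI impI)
    fix i j assume "i + j < m"
    then have "ord_ge (i + j + 1) (s m - s (i + j + 1))" by (intro tail) simp
    then show "bcoeff (L - s m) i j = 0" by (simp add: ord_ge_def L_def)
  qed
qed

definition hom_part :: "nat \<Rightarrow> 'a::comm_ring_1 bps \<Rightarrow> 'a bps" where
  "hom_part k F = (\<Sum>i\<le>k. bconst (bcoeff F i (k - i)) * bmonom i (k - i))"

lemma bcoeff_hom_part: "bcoeff (hom_part k F) i j = (if i + j = k then bcoeff F i j else 0)"
proof -
  have "bcoeff (hom_part k F) i j = (\<Sum>a\<le>k. if a = i \<and> i + j = k then bcoeff F i j else 0)"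
    by (auto simp: hom_part_def bcoeff_sum bcoeff_bmonom intro!: sum.cong)
  then show ?thesis by (cases "i + j = k") auto
qed

lemma ord_ge_hom_part: "ord_ge k (hom_part k F)"
  by (simp add: ord_ge_def bcoeff_hom_part)

lemma ord_ge_sub_hom_part: "ord_ge k F \<Longrightarrow> ord_ge (Suc k) (F - hom_part k F)"
  by (auto simp: ord_ge_def bcoeff_hom_part)

definition ord_ge2 :: "nat \<Rightarrow> 'a::comm_ring_1 bps \<times> 'a bps \<Rightarrow> bool" where
  "ord_ge2 k w \<longleftrightarrow> ord_ge k (fst w) \<and> ord_ge k (snd w)"

lemma ord_ge2_0 [simp]: "ord_ge2 0 w"
  and ord_ge2_zero [simp]: "ord_ge2 k 0"
  by (simp_all add: ord_ge2_def)

lemma ord_ge2_mono: "ord_ge2 k v \<Longrightarrow> j \<le> k \<Longrightarrow> ord_ge2 j v"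
  by (auto simp: ord_ge2_def intro: ord_ge_mono)

lemma ord_ge2_add: "ord_ge2 k v \<Longrightarrow> ord_ge2 k w \<Longrightarrow> ord_ge2 k (v + w)"
  and ord_ge2_diff: "ord_ge2 k v \<Longrightarrow> ord_ge2 k w \<Longrightarrow> ord_ge2 k (v - w)"
  by (auto simp: ord_ge2_def intro: ord_ge_add ord_ge_diff)

lemma ord_ge2_eqI: "(\<And>k. ord_ge2 k (v - w)) \<Longrightarrow> v = w"
  by (simp add: ord_ge2_def prod_eq_iff ord_ge_eqI)

lemma ord_ge2_cauchy_limit:
  assumes "\<And>m. ord_ge2 m (s (Suc m) - s m)"
  obtains L where "\<And>m. ord_ge2 m (L - s m)"
proof -
  obtain L1 where "\<And>m. ord_ge m (L1 - fst (s m))"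
    using ord_ge_cauchy_limit[of "\<lambda>m. fst (s m)"] assms by (auto simp: ord_ge2_def)
  moreover obtain L2 where "\<And>m. ord_ge m (L2 - snd (s m))"
    using ord_ge_cauchy_limit[of "\<lambda>m. snd (s m)"] assms by (auto simp: ord_ge2_def)
  ultimately show ?thesis by (intro that[of "(L1, L2)"]) (simp add: ord_ge2_def)
qed

lemma ord_ge2_bX_bY: "ord_ge2 1 (bX, bY)"
  by (simp add: ord_ge2_def)

lemma ord_ge2_1_if_near_id: "ord_ge2 2 (P - (bX, bY)) \<Longrightarrow> ord_ge2 1 P"
  using ord_ge2_add[OF ord_ge2_mono[of 2 "P - (bX, bY)" 1] ord_ge2_bX_bY] by simp

lemma ord_ge_power_diff:
  assumes "ord_ge 1 p" "ord_ge 1 p'" "ord_ge (Suc j) (p - p')"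
  shows "ord_ge (a + j) (p ^ a - p' ^ a)"
proof (induct a)
  case (Suc a)
  have "p ^ Suc a - p' ^ Suc a = p * (p ^ a - p' ^ a) + (p - p') * p' ^ a"
    by (simp add: algebra_simps)
  moreover have "ord_ge (Suc a + j) (p * (p ^ a - p' ^ a))"
    using ord_ge_mult[OF assms(1) Suc] by simp
  moreover have "ord_ge (Suc a + j) ((p - p') * p' ^ a)"
    using ord_ge_mult[OF assms(3) ord_ge_power[OF assms(2), of a a]] by simp
  ultimately show ?case by (metis ord_ge_add)
qed simp

lemma ord_ge_monomial_diff:
  assumes P: "ord_ge2 1 P" and P': "ord_ge2 1 P'" and d: "ord_ge2 (Suc j) (P - P')"
  shows "ord_ge (a + b + j) (fst P ^ a * snd P ^ b - fst P' ^ a * snd P' ^ b)"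
proof -
  have "fst P ^ a * snd P ^ b - fst P' ^ a * snd P' ^ b
      = (fst P ^ a - fst P' ^ a) * snd P ^ b + fst P' ^ a * (snd P ^ b - snd P' ^ b)"
    by (simp add: algebra_simps)
  moreover have "ord_ge (a + b + j) ((fst P ^ a - fst P' ^ a) * snd P ^ b)"
    using assms unfolding ord_ge2_def
    by (intro ord_ge_mult[OF ord_ge_power_diff ord_ge_power[of 1 _ b b]]) auto
  moreover have "ord_ge (a + b + j) (fst P' ^ a * (snd P ^ b - snd P' ^ b))"
    using assms unfolding ord_ge2_def
    by (intro ord_ge_mult[OF ord_ge_power[of 1 _ a a] ord_ge_power_diff]) auto
  ultimately show ?thesis by (metis ord_ge_add)
qed

lemma ord_ge_monomial:
  "ord_ge2 1 P \<Longrightarrow> k \<le> a + b \<Longrightarrow> ord_ge k (fst P ^ a * snd P ^ b)"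
  unfolding ord_ge2_def by (rule ord_ge_mult[OF ord_ge_power[of 1 _ a a] ord_ge_power[of 1 _ b b]]) auto

section \<open>Substitution\<close>

definition subst_trunc :: "nat \<Rightarrow> 'a::comm_ring_1 bps \<times> 'a bps \<Rightarrow> 'a bps \<Rightarrow> 'a bps" where
  "subst_trunc n P F = (\<Sum>(a, b)\<in>{..n} \<times> {..n}. bconst (bcoeff F a b) * (fst P ^ a * snd P ^ b))"

(* subst P F = F(fst P, snd P). As P lies in m, the terms of F of degree > i + j do not
   contribute to the coefficient of x^i y^j. *)
definition subst :: "'a::comm_ring_1 bps \<times> 'a bps \<Rightarrow> 'a bps \<Rightarrow> 'a bps" where
  "subst P F = Abs_bps (\<lambda>i j. bcoeff (subst_trunc (i + j) P F) i j)"

lemma ord_ge_subst_trunc_diff: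
  assumes P: "ord_ge2 1 P" and mn: "m \<le> n"
  shows "ord_ge (Suc m) (subst_trunc n P F - subst_trunc m P F)"
proof -
  have "{..m} \<times> {..m} \<subseteq> {..n} \<times> {..n}" using mn by auto
  then have "subst_trunc n P F - subst_trunc m P F
      = (\<Sum>(a, b)\<in>{..n} \<times> {..n} - {..m} \<times> {..m}. bconst (bcoeff F a b) * (fst P ^ a * snd P ^ b))"
    unfolding subst_trunc_def by (subst sum.subset_diff) auto
  also have "ord_ge (Suc m) \<dots>"
    by (intro ord_ge_sum) (auto intro!: ord_ge_mult_left ord_ge_monomial[OF P])
  finally show ?thesis .
qed

lemma bcoeff_subst:
  assumes "ord_ge2 1 P" "i + j \<le> n"
  shows "bcoeff (subst P F) i j = bcoeff (subst_trunc n P F) i j"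
  using ord_ge_subst_trunc_diff[OF assms, of F] by (auto simp: subst_def ord_ge_def)

lemma ord_ge_subst_sub_trunc: "ord_ge2 1 P \<Longrightarrow> ord_ge (Suc n) (subst P F - subst_trunc n P F)"
  by (auto simp: ord_ge_def bcoeff_subst)

lemma subst_add: "subst P (F + G) = subst P F + subst P G"
proof -
  have "subst_trunc n P (F + G) = subst_trunc n P F + subst_trunc n P G" for n
    unfolding subst_trunc_def by (simp add: bconst_add distrib_right sum.distrib case_prod_unfold)
  then show ?thesis by (intro bps_eqI) (simp add: subst_def)
qed

lemma subst_diff: "subst P (F - G) = subst P F - subst P G"
  using subst_add[of P "F - G" G] by (simp add: algebra_simps)

lemma subst_trunc_mult:
  assumes P: "ord_ge2 1 P"
  shows "ord_ge (Suc n) (subst_trunc n P F * subst_trunc n P G - subst_trunc n P (F * G))"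
proof -
  define D where "D = {..n} \<times> {..n}"
  define h where "h = (\<lambda>((a, b), (c, d)).
    bconst (bcoeff F a b * bcoeff G c d) * (fst P ^ (a + c) * snd P ^ (b + d)))"
  define Q where "Q = {((a, b), (c, d)). a + c \<le> n \<and> b + d \<le> n}"
  have QD: "Q \<subseteq> D \<times> D" by (auto simp: Q_def D_def)
  have "subst_trunc n P F * subst_trunc n P G = (\<Sum>x\<in>D. \<Sum>y\<in>D. h (x, y))"
    unfolding subst_trunc_def D_def sum_product
    by (intro sum.cong refl) (auto simp: h_def bconst_mult power_add algebra_simps)
  also have "\<dots> = sum h (D \<times> D - Q) + sum h Q"
    using QD by (simp add: sum.cartesian_product sum.subset_diff[of Q] D_def)
  finally have prod: "subst_trunc n P F * subst_trunc n P G = sum h (D \<times> D - Q) + sum h Q" .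
  have high: "ord_ge (Suc n) (sum h (D \<times> D - Q))"
    by (intro ord_ge_sum) (auto simp: Q_def h_def intro!: ord_ge_mult_left ord_ge_monomial[OF P])
  have "subst_trunc n P (F * G) = (\<Sum>(e, f)\<in>D. \<Sum>(a, b)\<in>{..e} \<times> {..f}.
      bconst (bcoeff F a b * bcoeff G (e - a) (f - b)) * (fst P ^ e * snd P ^ f))"
    unfolding subst_trunc_def D_def bcoeff_mult bconst_sum sum_distrib_right
    by (intro sum.cong refl) (auto simp: sum.cartesian_product)
  also have "\<dots> = (\<Sum>(ef, ab)\<in>Sigma D (\<lambda>(e, f). {..e} \<times> {..f}). case ef of (e, f) \<Rightarrow> case ab of (a, b) \<Rightarrow>
      bconst (bcoeff F a b * bcoeff G (e - a) (f - b)) * (fst P ^ e * snd P ^ f))"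
    by (subst sum.Sigma[symmetric]) (auto simp: D_def case_prod_unfold)
  also have "\<dots> = sum h Q"
    by (rule sum.reindex_bij_witness[where i = "\<lambda>((a, b), (c, d)). ((a + c, b + d), (a, b))"
          and j = "\<lambda>((e, f), (a, b)). ((a, b), (e - a, f - b))"])
       (auto simp: Q_def D_def h_def)
  finally show ?thesis using prod high by simp
qed

lemma subst_mult:
  assumes P: "ord_ge2 1 P"
  shows "subst P (F * G) = subst P F * subst P G"
proof (rule bps_eqI)
  fix i j
  let ?n = "i + j" and ?T = "subst_trunc (i + j) P"
  have "subst P (F * G) - subst P F * subst P G
      = (subst P (F * G) - ?T (F * G)) - (?T F * ?T G - ?T (F * G)) - (subst P F * subst P G - ?T F * ?T G)"
    by (simp add: algebra_simps)
  moreover have "ord_ge (Suc ?n) \<dots>"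
    by (intro ord_ge_diff ord_ge_mult_diff ord_ge_subst_sub_trunc[OF P] subst_trunc_mult[OF P])
  ultimately show "bcoeff (subst P (F * G)) i j = bcoeff (subst P F * subst P G) i j"
    by (auto simp: ord_ge_def)
qed

lemma subst_trunc_bconst: "subst_trunc n P (bconst c) = bconst c"
  unfolding subst_trunc_def
  by (subst sum.remove[of _ "(0, 0)"]) (auto simp: bcoeff_bconst intro!: sum.neutral split: if_splits)

lemma subst_bconst: "subst P (bconst c) = bconst c"
  by (rule bps_eqI) (simp add: subst_def subst_trunc_bconst)

lemma subst_1: "subst P 1 = 1"
  using subst_bconst[of P 1] by simp

lemma subst_power: "ord_ge2 1 P \<Longrightarrow> subst P (F ^ n) = subst P F ^ n"
  by (induct n) (simp_all add: subst_mult subst_1)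

lemma subst_trunc_bmonom:
  "a \<le> n \<Longrightarrow> b \<le> n \<Longrightarrow> subst_trunc n P (bmonom a b) = fst P ^ a * snd P ^ b"
  unfolding subst_trunc_def
  by (subst sum.remove[of _ "(a, b)"]) (auto simp: bcoeff_bmonom intro!: sum.neutral split: if_splits)

lemma subst_bmonom:
  assumes P: "ord_ge2 1 P"
  shows "subst P (bmonom a b) = fst P ^ a * snd P ^ b"
proof (rule bps_eqI)
  fix i j
  have "bcoeff (subst P (bmonom a b)) i j = bcoeff (subst_trunc (a + b + i + j) P (bmonom a b)) i j"
    by (rule bcoeff_subst[OF P]) simp
  then show "bcoeff (subst P (bmonom a b)) i j = bcoeff (fst P ^ a * snd P ^ b) i j"
    by (simp add: subst_trunc_bmonom)
qed

lemma subst_bX: "ord_ge2 1 P \<Longrightarrow> subst P bX = fst P"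
  and subst_bY: "ord_ge2 1 P \<Longrightarrow> subst P bY = snd P"
  by (simp_all add: bX_eq_bmonom bY_eq_bmonom subst_bmonom)

lemma ord_ge_subst:
  assumes P: "ord_ge2 1 P" and F: "ord_ge k F"
  shows "ord_ge k (subst P F)"
proof -
  have "ord_ge k (subst_trunc n P F)" for n
    unfolding subst_trunc_def
  proof (intro ord_ge_sum, clarify)
    fix a b
    show "ord_ge k (bconst (bcoeff F a b) * (fst P ^ a * snd P ^ b))"
      using F ord_ge_monomial[OF P, of k a b] by (cases "a + b < k") (auto simp: ord_ge_def)
  qed
  then show ?thesis by (auto simp: ord_ge_def subst_def)
qed

lemma subst_id: "subst (bX, bY) F = F"
proof (rule bps_eqI)
  fix i j
  have "bcoeff (subst (bX, bY) F) i j = bcoeff (subst_trunc (i + j) (bX, bY) F) i j"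
    by (rule bcoeff_subst[OF ord_ge2_bX_bY]) simp
  also have "\<dots> = (\<Sum>(a, b)\<in>{..i + j} \<times> {..i + j}. bcoeff F a b * bcoeff (bmonom a b) i j)"
    by (simp add: subst_trunc_def bcoeff_sum case_prod_unfold bmonom_def)
  also have "\<dots> = bcoeff F i j"
    by (subst sum.remove[of _ "(i, j)"]) (auto simp: bcoeff_bmonom intro!: sum.neutral split: if_splits)
  finally show "bcoeff (subst (bX, bY) F) i j = bcoeff F i j" .
qed

lemma ord_ge_subst_near_id:
  assumes P: "ord_ge2 2 (P - (bX, bY))" and D: "ord_ge k D"
  shows "ord_ge (Suc k) (subst P D - D)"
proof -
  have P1: "ord_ge2 1 P" using P by (rule ord_ge2_1_if_near_id)
  have eq: "subst P D - D = (subst P D - subst_trunc k P D)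
      + (subst_trunc k P D - subst_trunc k (bX, bY) D) - (subst (bX, bY) D - subst_trunc k (bX, bY) D)"
    by (simp add: subst_id)
  have "subst_trunc k P D - subst_trunc k (bX, bY) D = (\<Sum>(a, b)\<in>{..k} \<times> {..k}.
      bconst (bcoeff D a b) * (fst P ^ a * snd P ^ b - bX ^ a * bY ^ b))"
    by (simp add: subst_trunc_def sum_subtractf[symmetric] case_prod_unfold right_diff_distrib)
  also have "ord_ge (Suc k) \<dots>"
  proof (intro ord_ge_sum, clarify)
    fix a b
    show "ord_ge (Suc k) (bconst (bcoeff D a b) * (fst P ^ a * snd P ^ b - bX ^ a * bY ^ b))"
      using D ord_ge_monomial_diff[OF P1 ord_ge2_bX_bY, of 1 a b] P
      by (cases "a + b < k") (auto simp: ord_ge_def numeral_2_eq_2)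
  qed
  finally show ?thesis
    unfolding eq
    by (rule ord_ge_diff[OF ord_ge_add[OF ord_ge_subst_sub_trunc[OF P1]]
          ord_ge_subst_sub_trunc[OF ord_ge2_bX_bY]])
qed

lemma subst_inj:
  assumes P: "ord_ge2 2 (P - (bX, bY))"
  shows "inj (subst P)"
proof (rule injI)
  fix F G assume "subst P F = subst P G"
  then have zero: "subst P (F - G) = 0" by (simp add: subst_diff)
  have "ord_ge k (F - G)" for k
  proof (induct k)
    case (Suc k)
    then show ?case using ord_ge_uminus[OF ord_ge_subst_near_id[OF P Suc]] zero by simp
  qed simp
  then show "F = G" by (rule ord_ge_eqI)
qed

lemma subst_surj:
  assumes P: "ord_ge2 2 (P - (bX, bY))"
  shows "surj (subst P)"
proof -
  have "T \<in> range (subst P)" for T :: "'a bps"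
  proof -
    \<comment> \<open>subst P moves a homogeneous part only by terms of higher degree.\<close>
    define s where "s = rec_nat 0 (\<lambda>k F. F + hom_part k (T - subst P F))"
    have s_Suc: "s (Suc k) = s k + hom_part k (T - subst P (s k))" for k
      by (simp add: s_def)
    have residual: "ord_ge k (T - subst P (s k))" for k
    proof (induct k)
      case (Suc k)
      let ?R = "T - subst P (s k)"
      have eq: "T - subst P (s (Suc k)) = (?R - hom_part k ?R) - (subst P (hom_part k ?R) - hom_part k ?R)"
        by (simp add: s_Suc subst_add)
      show ?case
        unfolding eq
        by (rule ord_ge_diff[OF ord_ge_sub_hom_part[OF Suc] ord_ge_subst_near_id[OF P ord_ge_hom_part]])
    qed (simp add: s_def)
    have "ord_ge m (s (Suc m) - s m)" for m
      by (simp add: s_Suc ord_ge_hom_part)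
    then obtain L where L: "\<And>m. ord_ge m (L - s m)"
      using ord_ge_cauchy_limit by blast
    have "ord_ge k (T - subst P L)" for k
    proof -
      have eq: "T - subst P L = (T - subst P (s k)) - subst P (L - s k)" by (simp add: subst_diff)
      show ?thesis
        unfolding eq by (rule ord_ge_diff[OF residual ord_ge_subst[OF ord_ge2_1_if_near_id[OF P] L]])
    qed
    then show ?thesis by (metis ord_ge_eqI rangeI)
  qed
  then show ?thesis by auto
qed

section \<open>Automorphisms and contact equivalence\<close>

definition bps_aut :: "('a::comm_ring_1 bps \<Rightarrow> 'a bps) \<Rightarrow> bool" where
  "bps_aut \<Phi> \<longleftrightarrow> bij \<Phi> \<and> (\<forall>F G. \<Phi> (F + G) = \<Phi> F + \<Phi> G) \<and> (\<forall>F G. \<Phi> (F * G) = \<Phi> F * \<Phi> G)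
     \<and> (\<forall>c. \<Phi> (bconst c) = bconst c)"

lemma bps_aut_subst:
  assumes P: "ord_ge2 2 (P - (bX, bY))"
  shows "bps_aut (subst P)"
  unfolding bps_aut_def bij_def
  using subst_inj[OF P] subst_surj[OF P] subst_add subst_mult[OF ord_ge2_1_if_near_id[OF P]] subst_bconst
  by blast

lemma bps_aut_add: "bps_aut \<Phi> \<Longrightarrow> \<Phi> (F + G) = \<Phi> F + \<Phi> G"
  and bps_aut_mult: "bps_aut \<Phi> \<Longrightarrow> \<Phi> (F * G) = \<Phi> F * \<Phi> G"
  and bps_aut_bconst: "bps_aut \<Phi> \<Longrightarrow> \<Phi> (bconst c) = bconst c"
  by (simp_all add: bps_aut_def)

lemma bps_aut_1: "bps_aut \<Phi> \<Longrightarrow> \<Phi> 1 = 1"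
  using bps_aut_bconst[of \<Phi> 1] by simp

lemma bps_aut_diff: "bps_aut \<Phi> \<Longrightarrow> \<Phi> (F - G) = \<Phi> F - \<Phi> G"
  using bps_aut_add[of \<Phi> "F - G" G] by (simp add: algebra_simps)

lemma bps_aut_inv:
  assumes \<Phi>: "bps_aut \<Phi>"
  shows "bps_aut (inv \<Phi>)"
proof -
  have bij: "bij \<Phi>" using \<Phi> by (simp add: bps_aut_def)
  have inv_\<Phi>: "inv \<Phi> (\<Phi> F) = F" for F using bij by (simp add: bij_is_inj)
  have \<Phi>_inv: "\<Phi> (inv \<Phi> F) = F" for F using bij by (simp add: bij_is_surj surj_f_inv_f)
  show ?thesis
    unfolding bps_aut_def
  proof (intro conjI allI)
    show "bij (inv \<Phi>)" using bij by (rule bij_imp_bij_inv)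
    fix F G c
    show "inv \<Phi> (F + G) = inv \<Phi> F + inv \<Phi> G" by (metis inv_\<Phi> \<Phi>_inv bps_aut_add[OF \<Phi>])
    show "inv \<Phi> (F * G) = inv \<Phi> F * inv \<Phi> G" by (metis inv_\<Phi> \<Phi>_inv bps_aut_mult[OF \<Phi>])
    show "inv \<Phi> (bconst c) = bconst c" by (metis inv_\<Phi> bps_aut_bconst[OF \<Phi>])
  qed
qed

lemma bps_aut_comp: "bps_aut \<Phi> \<Longrightarrow> bps_aut \<Psi> \<Longrightarrow> bps_aut (\<Psi> \<circ> \<Phi>)"
  by (simp add: bps_aut_def bij_comp)

type_synonym 'a bmat = "('a bps \<times> 'a bps) \<times> ('a bps \<times> 'a bps)"

definition bmat_apply :: "'a::comm_ring_1 bmat \<Rightarrow> 'a bps \<times> 'a bps \<Rightarrow> 'a bps \<times> 'a bps" where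
  "bmat_apply U w = (case U of ((a, b), (c, d)) \<Rightarrow> (a * fst w + b * snd w, c * fst w + d * snd w))"

definition bmat_mult :: "'a::comm_ring_1 bmat \<Rightarrow> 'a bmat \<Rightarrow> 'a bmat" where
  "bmat_mult V U = (case V of ((a, b), (c, d)) \<Rightarrow> case U of ((e, f), (g, h)) \<Rightarrow>
     ((a * e + b * g, a * f + b * h), (c * e + d * g, c * f + d * h)))"

definition bmat_det :: "'a::comm_ring_1 bmat \<Rightarrow> 'a bps" where
  "bmat_det U = (case U of ((a, b), (c, d)) \<Rightarrow> a * d - b * c)"

definition bmat_id :: "'a::comm_ring_1 bmat" where
  "bmat_id = ((1, 0), (0, 1))"

definition bmat_map :: "('a::comm_ring_1 bps \<Rightarrow> 'a bps) \<Rightarrow> 'a bmat \<Rightarrow> 'a bmat" where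
  "bmat_map \<Phi> = map_prod (map_prod \<Phi> \<Phi>) (map_prod \<Phi> \<Phi>)"

lemma bmat_apply_id [simp]: "bmat_apply bmat_id w = w"
  by (simp add: bmat_apply_def bmat_id_def)

lemma bmat_apply_zero [simp]: "bmat_apply U 0 = 0"
  and bmat_apply_zero_mat [simp]: "bmat_apply 0 w = 0"
  by (auto simp: bmat_apply_def zero_prod_def split: prod.splits)

lemma bmat_apply_add: "bmat_apply U (v + w) = bmat_apply U v + bmat_apply U w"
  and bmat_apply_diff: "bmat_apply U (v - w) = bmat_apply U v - bmat_apply U w"
  by (auto simp: bmat_apply_def algebra_simps split: prod.splits)

lemma bmat_apply_add_mat: "bmat_apply (U + W) v = bmat_apply U v + bmat_apply W v"
  and bmat_apply_diff_mat: "bmat_apply (U - W) v = bmat_apply U v - bmat_apply W v"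
  by (auto simp: bmat_apply_def algebra_simps split: prod.splits)

lemma bmat_apply_mult: "bmat_apply V (bmat_apply U w) = bmat_apply (bmat_mult V U) w"
  by (cases V; cases U) (auto simp: bmat_apply_def bmat_mult_def algebra_simps)

lemma bmat_det_mult: "bmat_det (bmat_mult V U) = bmat_det V * bmat_det U"
  by (cases V; cases U) (auto simp: bmat_det_def bmat_mult_def algebra_simps)

lemma bmat_apply_map:
  "bps_aut \<Phi> \<Longrightarrow> map_prod \<Phi> \<Phi> (bmat_apply U w) = bmat_apply (bmat_map \<Phi> U) (map_prod \<Phi> \<Phi> w)"
  by (cases U; cases w) (auto simp: bmat_apply_def bmat_map_def bps_aut_add bps_aut_mult)

lemma map_prod_diff: "bps_aut \<Phi> \<Longrightarrow> map_prod \<Phi> \<Phi> (v - w) = map_prod \<Phi> \<Phi> v - map_prod \<Phi> \<Phi> w"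
  by (cases v; cases w) (simp add: bps_aut_diff)

lemma bmat_det_map: "bps_aut \<Phi> \<Longrightarrow> bmat_det (bmat_map \<Phi> U) = \<Phi> (bmat_det U)"
  by (cases U) (auto simp: bmat_det_def bmat_map_def bps_aut_diff bps_aut_mult)

lemma bps_aut_dvd_one: "bps_aut \<Phi> \<Longrightarrow> F dvd 1 \<Longrightarrow> \<Phi> F dvd 1"
  by (metis bps_aut_1 bps_aut_mult dvd_def)

lemma bmat_left_inverse:
  assumes "bmat_det U dvd 1"
  obtains V where "bmat_det V dvd 1" "\<And>w. bmat_apply V (bmat_apply U w) = w"
proof -
  obtain a b c d where U: "U = ((a, b), (c, d))" by (metis prod.exhaust)
  obtain v where v: "1 = (a * d - b * c) * v" using assms by (auto simp: U bmat_det_def elim: dvdE)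
  define V where "V = ((v * d, - v * b), (- v * c, v * a))"
  have "bmat_det V = v * ((a * d - b * c) * v)"
    by (simp add: V_def bmat_det_def algebra_simps)
  then have "1 = bmat_det V * (a * d - b * c)"
    using v by (simp add: mult.commute)
  then have "bmat_det V dvd 1" by (rule dvdI)
  moreover have "bmat_apply V (bmat_apply U w) = w" for w
  proof -
    have "bmat_apply V (bmat_apply U w) = ((a * d - b * c) * v * fst w, (a * d - b * c) * v * snd w)"
      by (simp add: V_def U bmat_apply_def algebra_simps)
    then show ?thesis using v by simp
  qed
  ultimately show ?thesis by (rule that)
qed

definition bcontact_equiv :: "'a::comm_ring_1 bps \<times> 'a bps \<Rightarrow> 'a bps \<times> 'a bps \<Rightarrow> bool" where
  "bcontact_equiv F G \<longleftrightarrow> (\<exists>U \<Phi>. bmat_det U dvd 1 \<and> bps_aut \<Phi> \<and> G = bmat_apply U (map_prod \<Phi> \<Phi> F))"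

lemma bcontact_equivI:
  "bmat_det U dvd 1 \<Longrightarrow> bps_aut \<Phi> \<Longrightarrow> bcontact_equiv F (bmat_apply U (map_prod \<Phi> \<Phi> F))"
  unfolding bcontact_equiv_def by blast

lemma bcontact_equiv_sym:
  assumes "bcontact_equiv F G"
  shows "bcontact_equiv G F"
proof -
  obtain U \<Phi> where U: "bmat_det U dvd 1" and \<Phi>: "bps_aut \<Phi>" and G: "G = bmat_apply U (map_prod \<Phi> \<Phi> F)"
    using assms by (auto simp: bcontact_equiv_def)
  obtain V where V: "bmat_det V dvd 1" and VU: "\<And>w. bmat_apply V (bmat_apply U w) = w"
    using bmat_left_inverse[OF U] by blast
  have \<Phi>': "bps_aut (inv \<Phi>)" using \<Phi> by (rule bps_aut_inv)
  have "inv \<Phi> (\<Phi> x) = x" for x using \<Phi> by (simp add: bps_aut_def bij_is_inj)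
  then have "F = map_prod (inv \<Phi>) (inv \<Phi>) (bmat_apply V G)"
    by (simp add: G VU map_prod_def split_def)
  also have "\<dots> = bmat_apply (bmat_map (inv \<Phi>) V) (map_prod (inv \<Phi>) (inv \<Phi>) G)"
    by (rule bmat_apply_map[OF \<Phi>'])
  moreover have "bmat_det (bmat_map (inv \<Phi>) V) dvd 1"
    by (simp add: bmat_det_map[OF \<Phi>'] bps_aut_dvd_one[OF \<Phi>' V])
  ultimately show ?thesis
    unfolding bcontact_equiv_def using \<Phi>' by blast
qed

lemma bcontact_equiv_trans:
  assumes "bcontact_equiv F G" "bcontact_equiv G H"
  shows "bcontact_equiv F H"
proof -
  obtain U \<Phi> where U: "bmat_det U dvd 1" and \<Phi>: "bps_aut \<Phi>" and G: "G = bmat_apply U (map_prod \<Phi> \<Phi> F)"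
    using assms(1) by (auto simp: bcontact_equiv_def)
  obtain V \<Psi> where V: "bmat_det V dvd 1" and \<Psi>: "bps_aut \<Psi>" and H: "H = bmat_apply V (map_prod \<Psi> \<Psi> G)"
    using assms(2) by (auto simp: bcontact_equiv_def)
  have "H = bmat_apply V (bmat_apply (bmat_map \<Psi> U) (map_prod \<Psi> \<Psi> (map_prod \<Phi> \<Phi> F)))"
    by (simp add: H G bmat_apply_map[OF \<Psi>])
  also have "\<dots> = bmat_apply (bmat_mult V (bmat_map \<Psi> U)) (map_prod (\<Psi> \<circ> \<Phi>) (\<Psi> \<circ> \<Phi>) F)"
    by (simp add: bmat_apply_mult prod.map_comp)
  finally have "H = \<dots>" .
  moreover have "bmat_det (bmat_mult V (bmat_map \<Psi> U)) dvd 1"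
    using mult_dvd_mono[OF V bps_aut_dvd_one[OF \<Psi> U]] by (simp add: bmat_det_mult bmat_det_map[OF \<Psi>])
  ultimately show ?thesis
    unfolding bcontact_equiv_def using bps_aut_comp[OF \<Phi> \<Psi>] by blast
qed

lemma ord_ge_1_iff_not_dvd_one: "ord_ge 1 (F :: 'a::field bps) \<longleftrightarrow> \<not> F dvd 1"
  by (simp add: ord_ge_1_iff bps_dvd_one_iff dvd_field_iff)

lemma bps_aut_ord_ge_1:
  fixes F :: "'a::field bps"
  assumes \<Phi>: "bps_aut \<Phi>" and F: "ord_ge 1 F"
  shows "ord_ge 1 (\<Phi> F)"
proof -
  have "F = inv \<Phi> (\<Phi> F)" using \<Phi> by (simp add: bps_aut_def bij_is_inj)
  then show ?thesis
    using F bps_aut_dvd_one[OF bps_aut_inv[OF \<Phi>], of "\<Phi> F"] by (metis ord_ge_1_iff_not_dvd_one)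
qed

lemma bps_aut_ord_ge:
  fixes F :: "'a::field bps"
  assumes \<Phi>: "bps_aut \<Phi>"
  shows "ord_ge k F \<Longrightarrow> ord_ge k (\<Phi> F)"
proof (induct k arbitrary: F)
  case (Suc k)
  obtain A B where F: "F = bX * A + bY * B" and "ord_ge k A" "ord_ge k B"
    using ord_ge_Suc_decomp[OF Suc.prems] by blast
  then have "ord_ge (Suc k) (\<Phi> bX * \<Phi> A)" "ord_ge (Suc k) (\<Phi> bY * \<Phi> B)"
    using bps_aut_ord_ge_1[OF \<Phi>] Suc.hyps by (auto intro!: ord_ge_mult[of 1 _ k])
  then show ?case
    by (simp add: F bps_aut_add[OF \<Phi>] bps_aut_mult[OF \<Phi>] ord_ge_add)
qed simp

lemma ord_ge2_map: "bps_aut \<Phi> \<Longrightarrow> ord_ge2 k w \<Longrightarrow> ord_ge2 k (map_prod \<Phi> \<Phi> (w :: 'a::field bps \<times> _))"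
  by (cases w) (simp add: ord_ge2_def bps_aut_ord_ge)

definition ord_ge_mat :: "nat \<Rightarrow> 'a::comm_ring_1 bmat \<Rightarrow> bool" where
  "ord_ge_mat k U \<longleftrightarrow> ord_ge2 k (fst U) \<and> ord_ge2 k (snd U)"

lemma ord_ge_mat_0 [simp]: "ord_ge_mat 0 U"
  by (simp add: ord_ge_mat_def)

lemma ord_ge_mat_zero [simp]: "ord_ge_mat k 0"
  by (simp add: ord_ge_mat_def)

lemma ord_ge_mat_mono: "ord_ge_mat k U \<Longrightarrow> j \<le> k \<Longrightarrow> ord_ge_mat j U"
  by (auto simp: ord_ge_mat_def intro: ord_ge2_mono)

lemma ord_ge_mat_add: "ord_ge_mat k U \<Longrightarrow> ord_ge_mat k V \<Longrightarrow> ord_ge_mat k (U + V)"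
  by (auto simp: ord_ge_mat_def intro: ord_ge2_add)

lemma ord_ge_mat_cauchy_limit:
  assumes "\<And>m. ord_ge_mat m (s (Suc m) - s m)"
  obtains L where "\<And>m. ord_ge_mat m (L - s m)"
proof -
  obtain L1 where "\<And>m. ord_ge2 m (L1 - fst (s m))"
    using ord_ge2_cauchy_limit[of "\<lambda>m. fst (s m)"] assms by (auto simp: ord_ge_mat_def)
  moreover obtain L2 where "\<And>m. ord_ge2 m (L2 - snd (s m))"
    using ord_ge2_cauchy_limit[of "\<lambda>m. snd (s m)"] assms by (auto simp: ord_ge_mat_def)
  ultimately show ?thesis by (intro that[of "(L1, L2)"]) (simp add: ord_ge_mat_def)
qed

lemma ord_ge2_bmat_apply:
  "ord_ge_mat a U \<Longrightarrow> ord_ge2 b w \<Longrightarrow> k \<le> a + b \<Longrightarrow> ord_ge2 k (bmat_apply U w)"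
  by (cases U) (auto simp: ord_ge_mat_def ord_ge2_def bmat_apply_def intro!: ord_ge_add ord_ge_mult)

lemma bmat_det_dvd_one_if_near_id:
  assumes "ord_ge_mat 1 (U - bmat_id)"
  shows "bmat_det U dvd 1"
proof -
  obtain a b c d where U: "U = ((a, b), (c, d))" by (metis prod.exhaust)
  have "bcoeff a 0 0 = 1" "bcoeff b 0 0 = 0" "bcoeff c 0 0 = 0" "bcoeff d 0 0 = 1"
    using assms by (auto simp: U bmat_id_def ord_ge_mat_def ord_ge2_def ord_ge_1_iff bcoeff_1)
  then have "bcoeff (bmat_det U) 0 0 = 1" by (simp add: U bmat_det_def bcoeff_mult)
  then show ?thesis by (simp add: bps_dvd_one_iff)
qed

definition bdetermined :: "nat \<Rightarrow> 'a::comm_ring_1 bps \<times> 'a bps \<Rightarrow> bool" where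
  "bdetermined k H \<longleftrightarrow> (\<forall>G. ord_ge2 (Suc k) (G - H) \<longrightarrow> bcontact_equiv G H)"

lemma bdetermined_contact_invariant:
  fixes H M :: "'a::field bps \<times> 'a bps"
  assumes HM: "bcontact_equiv H M" and M: "bdetermined k M"
  shows "bdetermined k H"
  unfolding bdetermined_def
proof (intro allI impI)
  fix G assume GH: "ord_ge2 (Suc k) (G - H)"
  obtain U \<Phi> where U: "bmat_det U dvd 1" and \<Phi>: "bps_aut \<Phi>" and M_eq: "M = bmat_apply U (map_prod \<Phi> \<Phi> H)"
    using HM by (auto simp: bcontact_equiv_def)
  define G' where "G' = bmat_apply U (map_prod \<Phi> \<Phi> G)"
  have "G' - M = bmat_apply U (map_prod \<Phi> \<Phi> (G - H))"
    by (simp add: G'_def M_eq bmat_apply_diff map_prod_diff[OF \<Phi>])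
  then have "ord_ge2 (Suc k) (G' - M)"
    using ord_ge2_bmat_apply[OF ord_ge_mat_0 ord_ge2_map[OF \<Phi> GH]] by simp
  then have "bcontact_equiv G' M" using M unfolding bdetermined_def by blast
  moreover have "bcontact_equiv G G'" unfolding G'_def using U \<Phi> by (rule bcontact_equivI)
  ultimately show "bcontact_equiv G H"
    using bcontact_equiv_sym[OF HM] by (blast intro: bcontact_equiv_trans)
qed

section \<open>Finite determinacy of pairs of cubic forms\<close>

definition cubic :: "'a::comm_ring_1 \<times> 'a \<times> 'a \<times> 'a \<Rightarrow> 'a bps \<times> 'a bps \<Rightarrow> 'a bps" where
  "cubic c P = (case c of (c0, c1, c2, c3) \<Rightarrow>
     bconst c0 * fst P ^ 3 + bconst c1 * (fst P ^ 2 * snd P) + bconst c2 * (fst P * snd P ^ 2)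
     + bconst c3 * snd P ^ 3)"

definition cubic_dx :: "'a::comm_ring_1 \<times> 'a \<times> 'a \<times> 'a \<Rightarrow> 'a bps" where
  "cubic_dx c = (case c of (c0, c1, c2, c3) \<Rightarrow>
     bconst c0 * (3 * bX ^ 2) + bconst c1 * (2 * bX * bY) + bconst c2 * bY ^ 2)"

definition cubic_dy :: "'a::comm_ring_1 \<times> 'a \<times> 'a \<times> 'a \<Rightarrow> 'a bps" where
  "cubic_dy c = (case c of (c0, c1, c2, c3) \<Rightarrow>
     bconst c1 * bX ^ 2 + bconst c2 * (2 * bX * bY) + bconst c3 * (3 * bY ^ 2))"

type_synonym 'a cubic_pair = "('a \<times> 'a \<times> 'a \<times> 'a) \<times> ('a \<times> 'a \<times> 'a \<times> 'a)"

definition cubic_pair :: "'a::comm_ring_1 cubic_pair \<Rightarrow> 'a bps \<times> 'a bps \<Rightarrow> 'a bps \<times> 'a bps" where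
  "cubic_pair C P = (cubic (fst C) P, cubic (snd C) P)"

definition cubic_jacobian :: "'a::comm_ring_1 cubic_pair \<Rightarrow> 'a bmat" where
  "cubic_jacobian C = ((cubic_dx (fst C), cubic_dy (fst C)), (cubic_dx (snd C), cubic_dy (snd C)))"

lemma subst_cubic:
  assumes P: "ord_ge2 1 P"
  shows "subst P (cubic c (bX, bY)) = cubic c P"
  by (cases c) (simp add: cubic_def subst_add subst_mult[OF P] subst_power[OF P] subst_bconst
      subst_bX[OF P] subst_bY[OF P])

lemma ord_ge_mat_cubic_jacobian: "ord_ge_mat 2 (cubic_jacobian C)"
proof -
  have quad: "ord_ge 2 (bX ^ 2)" "ord_ge 2 (bX * bY)" "ord_ge 2 (bY ^ 2)"
    using ord_ge_power[of 1 bX 2 2] ord_ge_mult[of 1 bX 1 bY 2] ord_ge_power[of 1 bY 2 2] by simp_all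
  have "ord_ge 2 (cubic_dx c)" "ord_ge 2 (cubic_dy c)" for c
    unfolding cubic_dx_def cubic_dy_def mult.assoc
    by (cases c, simp only: prod.case, intro quad ord_ge_add ord_ge_mult_left)+
  then show ?thesis
    unfolding ord_ge_mat_def ord_ge2_def cubic_jacobian_def fst_conv snd_conv by blast
qed

lemma ord_ge_mult_quadratic:
  "ord_ge 1 B \<Longrightarrow> ord_ge m d \<Longrightarrow> ord_ge m d' \<Longrightarrow> 2 \<le> m \<Longrightarrow> ord_ge (m + 3) (B * (d * d'))"
  by (rule ord_ge_mult[OF _ ord_ge_mult[of m d m d' "m + m"]]) auto

lemma cube_taylor:
  assumes p: "ord_ge 2 (p - x)" and x: "ord_ge 1 x" and m: "2 \<le> m" and d: "ord_ge m d"
  shows "ord_ge (m + 3) ((p + d) ^ 3 - p ^ 3 - d * (3 * x ^ 2))"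
proof -
  have p1: "ord_ge 1 p" using ord_ge_add[OF ord_ge_mono[OF p] x] by simp
  have "p ^ 2 - x ^ 2 = (p + x) * (p - x)" by (simp add: algebra_simps power2_eq_square)
  then have "ord_ge 3 (p ^ 2 - x ^ 2)" using ord_ge_mult[OF ord_ge_add[OF p1 x] p, of 3] by simp
  then have lin: "ord_ge (m + 3) (3 * (p ^ 2 - x ^ 2) * d)"
    by (rule ord_ge_mult[OF ord_ge_mult_left d]) simp
  have "ord_ge 1 d" using d m by (auto intro: ord_ge_mono)
  then have "ord_ge (m + 3) (3 * (p ^ 2 - x ^ 2) * d + (3 * p) * (d * d) + d * (d * d))"
    using p1 d m by (intro ord_ge_add lin ord_ge_mult_quadratic ord_ge_mult_left)
  moreover have "(p + d) ^ 3 - p ^ 3 - d * (3 * x ^ 2) = 3 * (p ^ 2 - x ^ 2) * d + (3 * p) * (d * d) + d * (d * d)"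
    by (simp add: algebra_simps power2_eq_square power3_eq_cube)
  ultimately show ?thesis by simp
qed

lemma square_times_taylor:
  assumes p: "ord_ge 2 (p - x)" "ord_ge 1 x" and q: "ord_ge 2 (q - y)" "ord_ge 1 y" and m: "2 \<le> m"
    and dp: "ord_ge m dp" and dq: "ord_ge m dq"
  shows "ord_ge (m + 3) ((p + dp) ^ 2 * (q + dq) - p ^ 2 * q - (dp * (2 * x * y) + dq * x ^ 2))"
proof -
  have p1: "ord_ge 1 p" and q1: "ord_ge 1 q"
    using ord_ge_add[OF ord_ge_mono[OF p(1)] p(2)] ord_ge_add[OF ord_ge_mono[OF q(1)] q(2)] by simp_all
  have "p ^ 2 - x ^ 2 = (p + x) * (p - x)" "p * q - x * y = (p - x) * q + x * (q - y)"
    by (simp_all add: algebra_simps power2_eq_square)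
  then have quad: "ord_ge 3 (p ^ 2 - x ^ 2)" "ord_ge 3 (p * q - x * y)"
    using ord_ge_mult[OF ord_ge_add[OF p1 p(2)] p(1), of 3]
      ord_ge_add[OF ord_ge_mult[OF p(1) q1, of 3] ord_ge_mult[OF p(2) q(1), of 3]]
    by simp_all
  have lin: "ord_ge (m + 3) ((p ^ 2 - x ^ 2) * dq)" "ord_ge (m + 3) (2 * (p * q - x * y) * dp)"
    by (rule ord_ge_mult[OF quad(1) dq], simp, rule ord_ge_mult[OF ord_ge_mult_left[OF quad(2)] dp], simp)
  have "ord_ge 1 dq" using dq m by (auto intro: ord_ge_mono)
  then have "ord_ge (m + 3) ((p ^ 2 - x ^ 2) * dq + 2 * (p * q - x * y) * dp + (2 * p) * (dp * dq)
      + q * (dp * dp) + dq * (dp * dp))"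
    using p1 q1 dp dq m by (intro ord_ge_add lin ord_ge_mult_quadratic ord_ge_mult_left)
  moreover have "(p + dp) ^ 2 * (q + dq) - p ^ 2 * q - (dp * (2 * x * y) + dq * x ^ 2)
      = (p ^ 2 - x ^ 2) * dq + 2 * (p * q - x * y) * dp + (2 * p) * (dp * dq) + q * (dp * dp) + dq * (dp * dp)"
    by (simp add: algebra_simps power2_eq_square)
  ultimately show ?thesis by simp
qed

lemma cubic_taylor:
  assumes P: "ord_ge2 2 (P - (bX, bY))" and m: "2 \<le> m" and dP: "ord_ge2 m dP"
  shows "ord_ge (m + 3) (cubic c (P + dP) - cubic c P - (fst dP * cubic_dx c + snd dP * cubic_dy c))"
proof -
  obtain p q dp dq where pq: "P = (p, q)" and d: "dP = (dp, dq)" by (cases P; cases dP)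
  obtain c0 c1 c2 c3 where c: "c = (c0, c1, c2, c3)" by (cases c)
  have p: "ord_ge 2 (p - bX)" "ord_ge 1 bX" and q: "ord_ge 2 (q - bY)" "ord_ge 1 bY"
    and dp: "ord_ge m dp" and dq: "ord_ge m dq"
    using P dP by (simp_all add: pq d ord_ge2_def)
  have "cubic c (p + dp, q + dq) - cubic c (p, q) - (dp * cubic_dx c + dq * cubic_dy c) =
      bconst c0 * ((p + dp) ^ 3 - p ^ 3 - dp * (3 * bX ^ 2))
    + bconst c1 * ((p + dp) ^ 2 * (q + dq) - p ^ 2 * q - (dp * (2 * bX * bY) + dq * bX ^ 2))
    + bconst c2 * ((q + dq) ^ 2 * (p + dp) - q ^ 2 * p - (dq * (2 * bY * bX) + dp * bY ^ 2))
    + bconst c3 * ((q + dq) ^ 3 - q ^ 3 - dq * (3 * bY ^ 2))"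
    by (simp add: c cubic_def cubic_dx_def cubic_dy_def algebra_simps)
  also have "ord_ge (m + 3) \<dots>"
    by (intro ord_ge_add ord_ge_mult_left cube_taylor[OF p m dp] cube_taylor[OF q m dq]
        square_times_taylor[OF p q m dp dq] square_times_taylor[OF q p m dq dp])
  finally show ?thesis by (simp add: pq d)
qed

lemma cubic_lipschitz:
  assumes "ord_ge2 1 P" "ord_ge2 1 P'" "ord_ge2 (Suc j) (P - P')"
  shows "ord_ge (j + 3) (cubic c P - cubic c P')"
proof -
  have mon: "ord_ge (j + 3) (fst P ^ a * snd P ^ b - fst P' ^ a * snd P' ^ b)" if "a + b = 3" for a b
    using ord_ge_monomial_diff[OF assms, of a b] that by (simp add: add.commute)
  have "cubic c P - cubic c P' =
      bconst (fst c) * (fst P ^ 3 * snd P ^ 0 - fst P' ^ 3 * snd P' ^ 0)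
    + bconst (fst (snd c)) * (fst P ^ 2 * snd P ^ 1 - fst P' ^ 2 * snd P' ^ 1)
    + bconst (fst (snd (snd c))) * (fst P ^ 1 * snd P ^ 2 - fst P' ^ 1 * snd P' ^ 2)
    + bconst (snd (snd (snd c))) * (fst P ^ 0 * snd P ^ 3 - fst P' ^ 0 * snd P' ^ 3)"
    by (cases c) (simp add: cubic_def algebra_simps)
  also have "ord_ge (j + 3) \<dots>"
    by (intro ord_ge_add ord_ge_mult_left mon) simp_all
  finally show ?thesis .
qed

lemma cubic_pair_taylor:
  assumes "ord_ge2 2 (P - (bX, bY))" "2 \<le> m" "ord_ge2 m dP"
  shows "ord_ge2 (m + 3) (cubic_pair C (P + dP) - cubic_pair C P - bmat_apply (cubic_jacobian C) dP)"
  using cubic_taylor[OF assms, of "fst C"] cubic_taylor[OF assms, of "snd C"]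
  by (simp add: ord_ge2_def cubic_pair_def cubic_jacobian_def bmat_apply_def algebra_simps)

lemma cubic_pair_lipschitz:
  "ord_ge2 1 P \<Longrightarrow> ord_ge2 1 P' \<Longrightarrow> ord_ge2 (Suc j) (P - P')
    \<Longrightarrow> ord_ge2 (j + 3) (cubic_pair C P - cubic_pair C P')"
  by (simp add: ord_ge2_def cubic_pair_def cubic_lipschitz)

(* For a residual r of order k = n + 4: r lies in m^(k-3) N + J m^(k-2), modulo m^(k+1). *)
definition tangent_mod :: "nat \<Rightarrow> 'a::comm_ring_1 bps \<times> 'a bps \<Rightarrow> 'a bmat \<Rightarrow> 'a bps \<times> 'a bps \<Rightarrow> bool" where
  "tangent_mod n N J r \<longleftrightarrow> (\<exists>W dP e. ord_ge_mat (n + 1) W \<and> ord_ge2 (n + 2) dP \<and> ord_ge2 (n + 5) e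
     \<and> r = bmat_apply W N + bmat_apply J dP + e)"

definition approx_solution ::
  "'a::comm_ring_1 cubic_pair \<Rightarrow> 'a bps \<times> 'a bps \<Rightarrow> nat \<Rightarrow> 'a bmat \<Rightarrow> 'a bps \<times> 'a bps \<Rightarrow> bool" where
  "approx_solution C G k U P \<longleftrightarrow> ord_ge_mat 1 (U - bmat_id) \<and> ord_ge2 2 (P - (bX, bY))
     \<and> ord_ge2 k (G - bmat_apply U (cubic_pair C P))"

lemma newton_step:
  assumes tangent: "\<And>r. ord_ge2 (n + 4) r \<Longrightarrow> tangent_mod n (cubic_pair C (bX, bY)) (cubic_jacobian C) r"
    and approx: "approx_solution C G (n + 4) U P"
  obtains W dP where "ord_ge_mat (n + 1) W" "ord_ge2 (n + 2) dP"
    "approx_solution C G (n + 5) (U + W) (P + dP)"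
proof -
  let ?N = "cubic_pair C (bX, bY)" and ?J = "cubic_jacobian C" and ?f = "cubic_pair C"
  have U: "ord_ge_mat 1 (U - bmat_id)" and P: "ord_ge2 2 (P - (bX, bY))"
    and R: "ord_ge2 (n + 4) (G - bmat_apply U (?f P))"
    using approx by (simp_all add: approx_solution_def)
  obtain W dP e where W: "ord_ge_mat (n + 1) W" and dP: "ord_ge2 (n + 2) dP" and e: "ord_ge2 (n + 5) e"
    and "G - bmat_apply U (?f P) = bmat_apply W ?N + bmat_apply ?J dP + e"
    using tangent[OF R] by (auto simp: tangent_mod_def)
  then have "G = bmat_apply U (?f P) + bmat_apply W ?N + bmat_apply ?J dP + e"
    by (simp add: algebra_simps)
  then have eq: "G - bmat_apply (U + W) (?f (P + dP)) = e
      - bmat_apply U (?f (P + dP) - ?f P - bmat_apply ?J dP)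
      - bmat_apply (U - bmat_id) (bmat_apply ?J dP)
      - bmat_apply W (?f (P + dP) - ?N)"
    by (simp add: bmat_apply_add bmat_apply_diff bmat_apply_add_mat bmat_apply_diff_mat algebra_simps)
  have taylor: "ord_ge2 (n + 5) (bmat_apply U (?f (P + dP) - ?f P - bmat_apply ?J dP))"
    by (rule ord_ge2_bmat_apply[OF ord_ge_mat_0 cubic_pair_taylor[OF P _ dP]]) simp_all
  have near_id: "ord_ge2 (n + 5) (bmat_apply (U - bmat_id) (bmat_apply ?J dP))"
    by (rule ord_ge2_bmat_apply[OF U ord_ge2_bmat_apply[OF ord_ge_mat_cubic_jacobian dP order_refl]]) simp
  have P': "ord_ge2 2 (P + dP - (bX, bY))"
    using ord_ge2_add[OF P ord_ge2_mono[OF dP]] by (simp add: algebra_simps)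
  then have "ord_ge2 4 (?f (P + dP) - ?N)"
    using cubic_pair_lipschitz[OF ord_ge2_1_if_near_id ord_ge2_bX_bY, of "P + dP" 1 C]
    by (simp add: numeral_2_eq_2 numeral_Bit0)
  then have lipschitz: "ord_ge2 (n + 5) (bmat_apply W (?f (P + dP) - ?N))"
    by (intro ord_ge2_bmat_apply[OF W]) auto
  have "ord_ge_mat 1 (U + W - bmat_id)"
    using ord_ge_mat_add[OF U ord_ge_mat_mono[OF W]] by (simp add: algebra_simps)
  moreover have "ord_ge2 (n + 5) (G - bmat_apply (U + W) (?f (P + dP)))"
    unfolding eq by (intro ord_ge2_diff e taylor near_id lipschitz)
  ultimately show ?thesis
    using W dP P' by (intro that) (simp_all add: approx_solution_def)
qed

lemma newton_sequence:
  assumes tangent: "\<And>n r. ord_ge2 (n + 4) r \<Longrightarrow> tangent_mod n (cubic_pair C (bX, bY)) (cubic_jacobian C) r"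
    and G: "ord_ge2 4 (G - cubic_pair C (bX, bY))"
  obtains Us Ps where "\<And>n. approx_solution C G (n + 4) (Us n) (Ps n)"
    "\<And>n. ord_ge_mat (n + 1) (Us (Suc n) - Us n)" "\<And>n. ord_ge2 (n + 2) (Ps (Suc n) - Ps n)"
proof -
  have "\<exists>s. \<forall>n. approx_solution C G (n + 4) (fst (s n)) (snd (s n))
      \<and> ord_ge_mat (n + 1) (fst (s (Suc n)) - fst (s n)) \<and> ord_ge2 (n + 2) (snd (s (Suc n)) - snd (s n))"
  proof (rule dependent_nat_choice)
    show "\<exists>s. approx_solution C G (0 + 4) (fst s) (snd s)"
      using G by (intro exI[of _ "(bmat_id, (bX, bY))"])
        (simp add: approx_solution_def ord_ge_mat_def ord_ge2_def zero_prod_def)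
  next
    fix s n assume "approx_solution C G (n + 4) (fst s) (snd s)"
    then obtain W dP where "ord_ge_mat (n + 1) W" "ord_ge2 (n + 2) dP"
      "approx_solution C G (n + 5) (fst s + W) (snd s + dP)"
      using newton_step[OF tangent] by blast
    then show "\<exists>s'. approx_solution C G (Suc n + 4) (fst s') (snd s')
        \<and> ord_ge_mat (n + 1) (fst s' - fst s) \<and> ord_ge2 (n + 2) (snd s' - snd s)"
      by (intro exI[of _ "(fst s + W, snd s + dP)"]) (simp add: add.commute)
  qed
  then obtain s where "\<And>n. approx_solution C G (n + 4) (fst (s n)) (snd (s n))"
    "\<And>n. ord_ge_mat (n + 1) (fst (s (Suc n)) - fst (s n))" "\<And>n. ord_ge2 (n + 2) (snd (s (Suc n)) - snd (s n))"
    by blast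
  then show ?thesis by (rule that)
qed

lemma cubic_pair_solve:
  assumes tangent: "\<And>n r. ord_ge2 (n + 4) r \<Longrightarrow> tangent_mod n (cubic_pair C (bX, bY)) (cubic_jacobian C) r"
    and G: "ord_ge2 4 (G - cubic_pair C (bX, bY))"
  obtains U P where "ord_ge_mat 1 (U - bmat_id)" "ord_ge2 2 (P - (bX, bY))"
    "G = bmat_apply U (cubic_pair C P)"
proof -
  obtain Us Ps where approx: "\<And>n. approx_solution C G (n + 4) (Us n) (Ps n)"
    and dU: "\<And>n. ord_ge_mat (n + 1) (Us (Suc n) - Us n)" and dP: "\<And>n. ord_ge2 (n + 2) (Ps (Suc n) - Ps n)"
    using newton_sequence[OF tangent G] by blast
  obtain U where U: "\<And>m. ord_ge_mat m (U - Us m)"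
    using ord_ge_mat_cauchy_limit[of Us] dU ord_ge_mat_mono by (metis le_add1)
  obtain P where P: "\<And>m. ord_ge2 m (P - Ps m)"
    using ord_ge2_cauchy_limit[of Ps] dP ord_ge2_mono by (metis le_add1 add_2_eq_Suc' le_SucI)
  have U1: "ord_ge_mat 1 (U - bmat_id)"
    using ord_ge_mat_add[OF U approx[of 1, unfolded approx_solution_def, THEN conjunct1]] by simp
  have "P - (bX, bY) = (P - Ps 2) + (Ps 2 - (bX, bY))" by simp
  then have P2: "ord_ge2 2 (P - (bX, bY))"
    using ord_ge2_add[OF P approx[of 2, unfolded approx_solution_def, THEN conjunct2, THEN conjunct1]]
    by argo
  have "ord_ge2 m (G - bmat_apply U (cubic_pair C P))" for m
  proof -
    let ?k = "Suc m"
    have eq: "G - bmat_apply U (cubic_pair C P) = (G - bmat_apply (Us ?k) (cubic_pair C (Ps ?k)))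
        - bmat_apply (U - Us ?k) (cubic_pair C (Ps ?k))
        - bmat_apply U (cubic_pair C P - cubic_pair C (Ps ?k))"
      by (simp add: bmat_apply_diff bmat_apply_diff_mat)
    have approx_k: "ord_ge2 m (G - bmat_apply (Us ?k) (cubic_pair C (Ps ?k)))"
      using approx[of ?k] by (auto simp: approx_solution_def elim: ord_ge2_mono)
    have limit_U: "ord_ge2 m (bmat_apply (U - Us ?k) (cubic_pair C (Ps ?k)))"
      by (rule ord_ge2_bmat_apply[OF U ord_ge2_0]) simp
    have "ord_ge2 (m + 3) (cubic_pair C P - cubic_pair C (Ps ?k))"
      using approx[of ?k] by (intro cubic_pair_lipschitz[OF ord_ge2_1_if_near_id[OF P2]
          ord_ge2_1_if_near_id P]) (simp add: approx_solution_def)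
    then have limit_P: "ord_ge2 m (bmat_apply U (cubic_pair C P - cubic_pair C (Ps ?k)))"
      by (rule ord_ge2_bmat_apply[OF ord_ge_mat_0]) simp
    show ?thesis unfolding eq by (rule ord_ge2_diff[OF ord_ge2_diff[OF approx_k limit_U] limit_P])
  qed
  then have "G = bmat_apply U (cubic_pair C P)" by (rule ord_ge2_eqI)
  with U1 P2 show ?thesis by (rule that)
qed

lemma bdetermined_cubic_pair:
  assumes tangent: "\<And>n r. ord_ge2 (n + 4) r \<Longrightarrow> tangent_mod n (cubic_pair C (bX, bY)) (cubic_jacobian C) r"
  shows "bdetermined 3 (cubic_pair C (bX, bY))"
  unfolding bdetermined_def
proof (intro allI impI)
  fix G assume "ord_ge2 (Suc 3) (G - cubic_pair C (bX, bY))"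
  then have "ord_ge2 4 (G - cubic_pair C (bX, bY))" by simp
  then obtain U P where U: "ord_ge_mat 1 (U - bmat_id)" and P: "ord_ge2 2 (P - (bX, bY))"
    and G: "G = bmat_apply U (cubic_pair C P)"
    using cubic_pair_solve[OF tangent] by blast
  have "G = bmat_apply U (map_prod (subst P) (subst P) (cubic_pair C (bX, bY)))"
    by (simp add: G cubic_pair_def subst_cubic[OF ord_ge2_1_if_near_id[OF P]])
  then have "bcontact_equiv (cubic_pair C (bX, bY)) G"
    using bcontact_equivI[OF bmat_det_dvd_one_if_near_id[OF U] bps_aut_subst[OF P]] by simp
  then show "bcontact_equiv G (cubic_pair C (bX, bY))" by (rule bcontact_equiv_sym)
qed

section \<open>Tangent spaces of the normal forms\<close>

definition pair_scale :: "'a::comm_ring_1 bps \<Rightarrow> 'a bps \<times> 'a bps \<Rightarrow> 'a bps \<times> 'a bps" where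
  "pair_scale s w = (s * fst w, s * snd w)"

lemma ord_ge2_pair_scale: "ord_ge2 k w \<Longrightarrow> ord_ge2 k (pair_scale s w)"
  by (simp add: ord_ge2_def pair_scale_def ord_ge_mult_left)

lemma tangent_modI:
  "ord_ge_mat (n + 1) W \<Longrightarrow> ord_ge2 (n + 2) dP \<Longrightarrow> ord_ge2 (n + 5) e
    \<Longrightarrow> tangent_mod n N J (bmat_apply W N + bmat_apply J dP + e)"
  unfolding tangent_mod_def by blast

lemma tangent_mod_apply_N: "ord_ge_mat (n + 1) W \<Longrightarrow> tangent_mod n N J (bmat_apply W N)"
  using tangent_modI[of n W 0 0 N J] by simp

lemma tangent_mod_apply_J: "ord_ge2 (n + 2) dP \<Longrightarrow> tangent_mod n N J (bmat_apply J dP)"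
  using tangent_modI[of n 0 dP 0 N J] by simp

lemma tangent_mod_higher_order: "ord_ge2 (n + 5) e \<Longrightarrow> tangent_mod n N J e"
  using tangent_modI[of n 0 0 e N J] by simp

lemma tangent_mod_add:
  assumes "tangent_mod n N J r" "tangent_mod n N J r'"
  shows "tangent_mod n N J (r + r')" and "tangent_mod n N J (r - r')"
proof -
  obtain W dP e where W: "ord_ge_mat (n + 1) W" "ord_ge2 (n + 2) dP" "ord_ge2 (n + 5) e"
    and r: "r = bmat_apply W N + bmat_apply J dP + e"
    using assms(1) by (auto simp: tangent_mod_def)
  obtain W' dP' e' where W': "ord_ge_mat (n + 1) W'" "ord_ge2 (n + 2) dP'" "ord_ge2 (n + 5) e'"
    and r': "r' = bmat_apply W' N + bmat_apply J dP' + e'"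
    using assms(2) by (auto simp: tangent_mod_def)
  have "r + r' = bmat_apply (W + W') N + bmat_apply J (dP + dP') + (e + e')"
    by (simp add: r r' bmat_apply_add bmat_apply_add_mat algebra_simps)
  then show "tangent_mod n N J (r + r')"
    using tangent_modI[OF ord_ge_mat_add ord_ge2_add ord_ge2_add] W W' by metis
  have "r - r' = bmat_apply (W - W') N + bmat_apply J (dP - dP') + (e - e')"
    by (simp add: r r' bmat_apply_diff bmat_apply_diff_mat algebra_simps)
  moreover have "ord_ge_mat (n + 1) (W - W')"
    using W(1) W'(1) by (auto simp: ord_ge_mat_def intro: ord_ge2_diff)
  ultimately show "tangent_mod n N J (r - r')"
    using tangent_modI[OF _ ord_ge2_diff ord_ge2_diff] W W' by metis
qed

lemma tangent_mod_scale:
  assumes "tangent_mod n N J r"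
  shows "tangent_mod n N J (pair_scale s r)"
proof -
  obtain W dP e where W: "ord_ge_mat (n + 1) W" "ord_ge2 (n + 2) dP" "ord_ge2 (n + 5) e"
    and r: "r = bmat_apply W N + bmat_apply J dP + e"
    using assms by (auto simp: tangent_mod_def)
  have "pair_scale s r = bmat_apply (bmat_map ((*) s) W) N + bmat_apply J (pair_scale s dP) + pair_scale s e"
    by (auto simp: r pair_scale_def bmat_apply_def bmat_map_def algebra_simps split: prod.splits)
  moreover have "ord_ge_mat (n + 1) (bmat_map ((*) s) W)"
    using W(1) by (auto simp: ord_ge_mat_def ord_ge2_def bmat_map_def ord_ge_mult_left)
  ultimately show ?thesis
    using tangent_modI ord_ge2_pair_scale W by metis
qed

lemma tangent_mod_sum:
  "(\<And>x. x \<in> A \<Longrightarrow> tangent_mod n N J (f x)) \<Longrightarrow> tangent_mod n N J (sum f A)"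
  by (induct A rule: infinite_finite_induct) (auto intro: tangent_mod_add(1) tangent_mod_higher_order)

lemma tangent_mod_of_monomials:
  assumes x: "\<And>i j. i + j = n + 4 \<Longrightarrow> tangent_mod n N J (bmonom i j, 0)"
    and y: "\<And>i j. i + j = n + 4 \<Longrightarrow> tangent_mod n N J (0, bmonom i j)"
    and r: "ord_ge2 (n + 4) r"
  shows "tangent_mod n N J r"
proof -
  let ?k = "n + 4"
  have "(hom_part ?k (fst r), hom_part ?k (snd r))
      = (\<Sum>i\<le>?k. pair_scale (bconst (bcoeff (fst r) i (?k - i))) (bmonom i (?k - i), 0))
      + (\<Sum>i\<le>?k. pair_scale (bconst (bcoeff (snd r) i (?k - i))) (0, bmonom i (?k - i)))"
    by (simp add: hom_part_def pair_scale_def sum_prod)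
  also have "tangent_mod n N J \<dots>"
    by (intro tangent_mod_add(1) tangent_mod_sum tangent_mod_scale x y) simp_all
  finally have "tangent_mod n N J (hom_part ?k (fst r), hom_part ?k (snd r))" .
  moreover have "tangent_mod n N J (r - (hom_part ?k (fst r), hom_part ?k (snd r)))"
    using r ord_ge_sub_hom_part[of ?k] by (intro tangent_mod_higher_order) (auto simp: ord_ge2_def add.commute)
  ultimately show ?thesis
    using tangent_mod_add(1) by fastforce
qed

lemma ord_ge2_bmonom: "k \<le> a + b \<Longrightarrow> ord_ge2 k (bmonom a b, 0)" "k \<le> a + b \<Longrightarrow> ord_ge2 k (0, bmonom a b)"
  by (simp_all add: ord_ge2_def ord_ge_bmonom)

lemma tangent_mod_x3_y3:
  defines "N \<equiv> (bmonom 3 0, bmonom 0 3)" and "J \<equiv> ((bmonom 2 0, 0), (0, bmonom 0 2))"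
  assumes "ord_ge2 (n + 4) r"
  shows "tangent_mod n N J r"
proof (rule tangent_mod_of_monomials[OF _ _ assms(3)])
  fix i j assume ij: "i + j = n + 4"
  show "tangent_mod n N J (bmonom i j, 0)"
  proof (cases "2 \<le> i")
    case True
    then obtain i' where i: "i = i' + 2" by (intro that[of "i - 2"]) simp
    have "(bmonom i j, 0) = bmat_apply J (bmonom i' j, 0)"
      by (simp add: J_def i bmat_apply_def bmonom_mult)
    then show ?thesis using ij i by (simp add: tangent_mod_apply_J ord_ge2_bmonom)
  next
    case False
    then obtain j' where j: "j = j' + 3" using ij by (intro that[of "j - 3"]) linarith
    have "(bmonom i j, 0) = bmat_apply ((0, bmonom i j'), (0, 0)) N"
      by (simp add: N_def j bmat_apply_def bmonom_mult)
    then show ?thesis using ij j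
      by (simp add: tangent_mod_apply_N ord_ge_mat_def ord_ge2_def ord_ge_bmonom)
  qed
next
  fix i j assume ij: "i + j = n + 4"
  show "tangent_mod n N J (0, bmonom i j)"
  proof (cases "2 \<le> j")
    case True
    then obtain j' where j: "j = j' + 2" by (intro that[of "j - 2"]) simp
    have "(0, bmonom i j) = bmat_apply J (0, bmonom i j')"
      by (simp add: J_def j bmat_apply_def bmonom_mult)
    then show ?thesis using ij j by (simp add: tangent_mod_apply_J ord_ge2_bmonom)
  next
    case False
    then obtain i' where i: "i = i' + 3" using ij by (intro that[of "i - 3"]) linarith
    have "(0, bmonom i j) = bmat_apply ((0, 0), (bmonom i' j, 0)) N"
      by (simp add: N_def i bmat_apply_def bmonom_mult)
    then show ?thesis using ij i
      by (simp add: tangent_mod_apply_N ord_ge_mat_def ord_ge2_def ord_ge_bmonom)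
  qed
qed

lemma tangent_mod_x3_y3_x2y:
  defines "N \<equiv> (bmonom 3 0, bmonom 0 3 + bmonom 2 1)" and "J \<equiv> ((bmonom 2 0, 0), (0, bmonom 2 0 + bmonom 0 2))"
  assumes "ord_ge2 (n + 4) r"
  shows "tangent_mod n N J r"
proof (rule tangent_mod_of_monomials[OF _ _ assms(3)])
  fix i j assume ij: "i + j = n + 4"
  show "tangent_mod n N J (bmonom i j, 0)"
  proof (cases "2 \<le> i")
    case True
    then obtain i' where i: "i = i' + 2" by (intro that[of "i - 2"]) simp
    have "(bmonom i j, 0) = bmat_apply J (bmonom i' j, 0)"
      by (simp add: J_def i bmat_apply_def bmonom_mult)
    then show ?thesis using ij i by (simp add: tangent_mod_apply_J ord_ge2_bmonom)
  next
    case False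
    then obtain j' where j: "j = j' + 3" using ij by (intro that[of "j - 3"]) linarith
    have "(bmonom i j, 0) = bmat_apply ((0, bmonom i j'), (0, 0)) N - bmat_apply J (bmonom i (j' + 1), 0)"
      by (simp add: N_def J_def j bmat_apply_def bmonom_mult algebra_simps)
    then show ?thesis using ij j
      by (simp add: tangent_mod_add tangent_mod_apply_N tangent_mod_apply_J ord_ge2_bmonom
          ord_ge_mat_def ord_ge2_def ord_ge_bmonom)
  qed
next
  have "tangent_mod n N J (0, bmonom i j)" if "i + j = n + 4" for i j
    using that
  proof (induct j arbitrary: i rule: less_induct)
    case (less j)
    show ?case
    proof (cases "2 \<le> j")
      case True
      then obtain j' where j: "j = j' + 2" by (intro that[of "j - 2"]) simp
      have "(0, bmonom i j) = bmat_apply J (0, bmonom i j') - (0, bmonom (i + 2) j')"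
        by (simp add: J_def j bmat_apply_def bmonom_mult algebra_simps)
      then show ?thesis using less j
        by (simp add: tangent_mod_add tangent_mod_apply_J ord_ge2_bmonom)
    next
      case False
      then obtain i' where i: "i = i' + 3" using less by (intro that[of "i - 3"]) linarith
      have "(0, bmonom i j) = bmat_apply ((0, 0), (bmonom i' j, 0)) N"
        by (simp add: N_def i bmat_apply_def bmonom_mult)
      then show ?thesis using less i
        by (simp add: tangent_mod_apply_N ord_ge_mat_def ord_ge2_def ord_ge_bmonom)
    qed
  qed
  then show "\<And>i j. i + j = n + 4 \<Longrightarrow> tangent_mod n N J (0, bmonom i j)" .
qed

lemma tangent_mod_x2y_x3_y3:
  defines "N \<equiv> (bmonom 2 1, bmonom 3 0 + bmonom 0 3)" and "J \<equiv> ((0, bmonom 2 0), (bmonom 2 0, bmonom 0 2))"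
  assumes "ord_ge2 (n + 4) r"
  shows "tangent_mod n N J r"
proof -
  have y: "tangent_mod n N J (0, bmonom i j)" if ij: "i + j = n + 4" for i j
  proof (cases "2 \<le> i")
    case True
    then obtain i' where i: "i = i' + 2" by (intro that[of "i - 2"]) simp
    have "(0, bmonom i j) = bmat_apply J (bmonom i' j, 0)"
      by (simp add: J_def i bmat_apply_def bmonom_mult)
    then show ?thesis using ij i by (simp add: tangent_mod_apply_J ord_ge2_bmonom)
  next
    case False
    then obtain j' where j: "j = j' + 3" using ij by (intro that[of "j - 3"]) linarith
    have "(0, bmonom i j) = bmat_apply ((0, 0), (0, bmonom i j')) N - bmat_apply J (bmonom (i + 1) j', 0)"
      by (simp add: N_def J_def j bmat_apply_def bmonom_mult algebra_simps numeral_eq_Suc add_Suc_right)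
    then show ?thesis using ij j
      by (simp add: tangent_mod_add tangent_mod_apply_N tangent_mod_apply_J ord_ge2_bmonom
          ord_ge_mat_def ord_ge2_def ord_ge_bmonom)
  qed
  have x2: "tangent_mod n N J (bmonom i j, 0)" if ij: "i + j = n + 4" and "2 \<le> i" for i j
  proof -
    obtain i' where i: "i = i' + 2" using \<open>2 \<le> i\<close> by (intro that[of "i - 2"]) simp
    have "(bmonom i j, 0) = bmat_apply J (0, bmonom i' j) - (0, bmonom i' (j + 2))"
      by (simp add: J_def i bmat_apply_def bmonom_mult algebra_simps)
    then show ?thesis using ij i y[of i' "j + 2"]
      by (simp add: tangent_mod_add tangent_mod_apply_J ord_ge2_bmonom)
  qed
  have x: "tangent_mod n N J (bmonom i j, 0)" if ij: "i + j = n + 4" for i j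
  proof (cases "2 \<le> i")
    case False
    then obtain j' where j: "j = j' + 3" using ij by (intro that[of "j - 3"]) linarith
    have "(bmonom i j, 0) = bmat_apply ((0, bmonom i j'), (0, 0)) N - (bmonom (i + 3) j', 0)"
      by (simp add: N_def j bmat_apply_def bmonom_mult algebra_simps)
    then show ?thesis using ij j x2[of "i + 3" j']
      by (simp add: tangent_mod_add tangent_mod_apply_N ord_ge_mat_def ord_ge2_def ord_ge_bmonom
          numeral_eq_Suc add_Suc_right)
  qed (rule x2[OF ij])
  show ?thesis using x y assms(3) by (rule tangent_mod_of_monomials)
qed

lemma tangent_mod_x3_x2y_y3_x2y_first:
  fixes lam :: "'a::comm_ring_1"
  defines "N \<equiv> (bmonom 3 0 + bmonom 2 1, bmonom 0 3 + bconst lam * bmonom 2 1)"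
    and "J \<equiv> ((bmonom 2 0, bmonom 2 0), (0, bconst lam * bmonom 2 0 + bmonom 0 2))"
  assumes ij: "i + j = n + 4"
  shows "tangent_mod n N J (bmonom i j, 0)"
proof (cases "2 \<le> i")
  case True
  then obtain i' where i: "i = i' + 2" by (intro that[of "i - 2"]) simp
  have "(bmonom i j, 0) = bmat_apply J (bmonom i' j, 0)"
    by (simp add: J_def i bmat_apply_def bmonom_mult)
  then show ?thesis using ij i by (simp add: tangent_mod_apply_J ord_ge2_bmonom)
next
  case False
  then obtain j' where j: "j = j' + 3" using ij by (intro that[of "j - 3"]) linarith
  have "(bmonom i j, 0) = bmat_apply ((0, bmonom i j'), (0, 0)) N
      - pair_scale (bconst lam) (bmat_apply J (bmonom i (j' + 1), 0))"
    by (simp add: N_def J_def j bmat_apply_def pair_scale_def bmonom_mult algebra_simps)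
  then show ?thesis using ij j
    by (simp add: tangent_mod_add tangent_mod_scale tangent_mod_apply_N tangent_mod_apply_J
        ord_ge2_bmonom ord_ge_mat_def ord_ge2_def ord_ge_bmonom)
qed

lemma tangent_mod_x3_x2y_y3_x2y_x_power:
  fixes lam :: "'a::field"
  defines "N \<equiv> (bmonom 3 0 + bmonom 2 1, bmonom 0 3 + bconst lam * bmonom 2 1)"
    and "J \<equiv> ((bmonom 2 0, bmonom 2 0), (0, bconst lam * bmonom 2 0 + bmonom 0 2))"
  assumes lam: "1 + lam \<noteq> 0"
  shows "tangent_mod n N J (0, bmonom (n + 4) 0)" and "tangent_mod n N J (0, bmonom (n + 3) 1)"
proof -
  have "(0, bmonom (n + 4) 0 + bmonom (n + 3) 1) = bmat_apply ((0, 0), (bmonom (n + 1) 0, 0)) N"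
    by (simp add: N_def bmat_apply_def bmonom_mult algebra_simps numeral_eq_Suc add_Suc_right)
  then have xN: "tangent_mod n N J (0, bmonom (n + 4) 0 + bmonom (n + 3) 1)"
    by (simp add: tangent_mod_apply_N ord_ge_mat_def ord_ge2_def ord_ge_bmonom)
  \<comment> \<open>The pure power of x in the second component is only reached with the factor 1 + lam.\<close>
  have "(0, bconst (1 + lam) * bmonom (n + 4) 0)
      = (0, bmonom (n + 4) 0 + bmonom (n + 3) 1) - bmat_apply ((0, 0), (bmonom n 1, 0)) N
        + bmat_apply J (0, bmonom (n + 2) 0) - (bmonom (n + 4) 0, 0)"
    by (simp add: N_def J_def bmat_apply_def bmonom_mult bconst_add algebra_simps numeral_eq_Suc
        add_Suc_right)
  then have "tangent_mod n N J (0, bconst (1 + lam) * bmonom (n + 4) 0)"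
    using xN tangent_mod_x3_x2y_y3_x2y_first[where i = "n + 4" and j = 0 and n = n and lam = lam]
    by (simp add: N_def J_def tangent_mod_add tangent_mod_apply_N tangent_mod_apply_J ord_ge2_bmonom
        ord_ge_mat_def ord_ge2_def ord_ge_bmonom)
  then have "tangent_mod n N J (pair_scale (bconst (inverse (1 + lam))) (0, bconst (1 + lam) * bmonom (n + 4) 0))"
    by (rule tangent_mod_scale)
  moreover have "bconst (inverse (1 + lam)) * (bconst (1 + lam) * bmonom (n + 4) 0) = bmonom (n + 4) 0"
    using lam by (simp add: mult.assoc[symmetric] bconst_mult[symmetric])
  ultimately show x: "tangent_mod n N J (0, bmonom (n + 4) 0)"
    by (simp add: pair_scale_def)
  have "(0 :: 'a bps, bmonom (n + 3) 1 :: 'a bps)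
      = (0, bmonom (n + 4) 0 + bmonom (n + 3) 1) - (0, bmonom (n + 4) 0)"
    by simp
  then show "tangent_mod n N J (0, bmonom (n + 3) 1)"
    using tangent_mod_add(2)[OF xN x] by argo
qed

lemma tangent_mod_x3_x2y_y3_x2y:
  fixes lam :: "'a::field"
  defines "N \<equiv> (bmonom 3 0 + bmonom 2 1, bmonom 0 3 + bconst lam * bmonom 2 1)"
    and "J \<equiv> ((bmonom 2 0, bmonom 2 0), (0, bconst lam * bmonom 2 0 + bmonom 0 2))"
  assumes lam: "1 + lam \<noteq> 0" and r: "ord_ge2 (n + 4) r"
  shows "tangent_mod n N J r"
proof (rule tangent_mod_of_monomials[OF _ _ r])
  show "tangent_mod n N J (bmonom i j, 0)" if "i + j = n + 4" for i j
    using tangent_mod_x3_x2y_y3_x2y_first[OF that] by (simp add: N_def J_def)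
  show "tangent_mod n N J (0, bmonom i j)" if "i + j = n + 4" for i j
    using that
  proof (induct j arbitrary: i rule: less_induct)
    case (less j)
    show ?case
    proof (cases "2 \<le> j")
      case True
      then obtain j' where j: "j = j' + 2" by (intro that[of "j - 2"]) simp
      have "(0, bmonom i j) = bmat_apply J (0, bmonom i j') - (bmonom (i + 2) j', 0)
          - pair_scale (bconst lam) (0, bmonom (i + 2) j')"
        by (simp add: J_def j bmat_apply_def pair_scale_def bmonom_mult algebra_simps)
      then show ?thesis
        using less j tangent_mod_x3_x2y_y3_x2y_first[where i = "i + 2" and j = j' and n = n and lam = lam]
        by (simp add: N_def J_def tangent_mod_add tangent_mod_scale tangent_mod_apply_J ord_ge2_bmonom)
    next
      case False
      then have "j = 0 \<and> i = n + 4 \<or> j = 1 \<and> i = n + 3" using less.prems by auto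
      then show ?thesis
        using tangent_mod_x3_x2y_y3_x2y_x_power[OF lam, of n] by (auto simp: N_def J_def)
    qed
  qed
qed

lemma bps_char_2:
  assumes "(2::'a::comm_ring_1) = 0"
  shows "(2::'a bps) = 0" and "(3::'a bps) = 1"
proof -
  have "(2::'a bps) = bconst 2" by simp
  then show two: "(2::'a bps) = 0" by (simp add: assms)
  have "(3::'a bps) = 2 + 1" by simp
  then show "(3::'a bps) = 1" by (simp add: two)
qed

lemma bdetermined_x3_y3:
  assumes "(2::'a::comm_ring_1) = 0"
  shows "bdetermined 3 (bmonom 3 0, bmonom 0 3 :: 'a bps)"
proof -
  let ?C = "((1, 0, 0, 0), (0, 0, 0, 1)) :: 'a cubic_pair"
  have "cubic_pair ?C (bX, bY) = (bmonom 3 0, bmonom 0 3)"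
    and "cubic_jacobian ?C = ((bmonom 2 0, 0), (0, bmonom 0 2))"
    using bps_char_2[OF assms]
    by (simp_all add: cubic_pair_def cubic_def cubic_jacobian_def cubic_dx_def cubic_dy_def bmonom_def)
  then show ?thesis using bdetermined_cubic_pair[of ?C] tangent_mod_x3_y3 by metis
qed

lemma bdetermined_x3_y3_x2y:
  assumes "(2::'a::comm_ring_1) = 0"
  shows "bdetermined 3 (bmonom 3 0, bmonom 0 3 + bmonom 2 1 :: 'a bps)"
proof -
  let ?C = "((1, 0, 0, 0), (0, 1, 0, 1)) :: 'a cubic_pair"
  have "cubic_pair ?C (bX, bY) = (bmonom 3 0, bmonom 0 3 + bmonom 2 1)"
    and "cubic_jacobian ?C = ((bmonom 2 0, 0), (0, bmonom 2 0 + bmonom 0 2))"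
    using bps_char_2[OF assms]
    by (simp_all add: cubic_pair_def cubic_def cubic_jacobian_def cubic_dx_def cubic_dy_def bmonom_def
        algebra_simps)
  then show ?thesis using bdetermined_cubic_pair[of ?C] tangent_mod_x3_y3_x2y by metis
qed

lemma bdetermined_x2y_x3_y3:
  assumes "(2::'a::comm_ring_1) = 0"
  shows "bdetermined 3 (bmonom 2 1, bmonom 3 0 + bmonom 0 3 :: 'a bps)"
proof -
  let ?C = "((0, 1, 0, 0), (1, 0, 0, 1)) :: 'a cubic_pair"
  have "cubic_pair ?C (bX, bY) = (bmonom 2 1, bmonom 3 0 + bmonom 0 3)"
    and "cubic_jacobian ?C = ((0, bmonom 2 0), (bmonom 2 0, bmonom 0 2))"
    using bps_char_2[OF assms]
    by (simp_all add: cubic_pair_def cubic_def cubic_jacobian_def cubic_dx_def cubic_dy_def bmonom_def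
        algebra_simps)
  then show ?thesis using bdetermined_cubic_pair[of ?C] tangent_mod_x2y_x3_y3 by metis
qed

lemma bdetermined_x3_x2y_y3_x2y:
  assumes "(2::'a::field) = 0" and "lam \<noteq> 1"
  shows "bdetermined 3 (bmonom 3 0 + bmonom 2 1, bmonom 0 3 + bconst lam * bmonom 2 1 :: 'a bps)"
proof -
  let ?C = "((1, 1, 0, 0), (0, lam, 0, 1)) :: 'a cubic_pair"
  have "cubic_pair ?C (bX, bY) = (bmonom 3 0 + bmonom 2 1, bmonom 0 3 + bconst lam * bmonom 2 1)"
    and "cubic_jacobian ?C = ((bmonom 2 0, bmonom 2 0), (0, bconst lam * bmonom 2 0 + bmonom 0 2))"
    using bps_char_2[OF assms(1)]
    by (simp_all add: cubic_pair_def cubic_def cubic_jacobian_def cubic_dx_def cubic_dy_def bmonom_def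
        algebra_simps)
  moreover have "1 + lam \<noteq> 0"
    using assms by (metis add_eq_0_iff one_add_one)
  ultimately show ?thesis using bdetermined_cubic_pair[of ?C] tangent_mod_x3_x2y_y3_x2y by metis
qed

section \<open>Coefficient functions\<close>

definition to_bps :: "'a::comm_ring_1 ps2 \<Rightarrow> 'a bps" where
  "to_bps f = Abs_bps (\<lambda>i j. f (i, j))"

definition of_bps :: "'a::comm_ring_1 bps \<Rightarrow> 'a ps2" where
  "of_bps F = (\<lambda>(i, j). bcoeff F i j)"

abbreviation to_bps2 :: "'a::comm_ring_1 ps2 \<times> 'a ps2 \<Rightarrow> 'a bps \<times> 'a bps" where
  "to_bps2 \<equiv> map_prod to_bps to_bps"

lemma bcoeff_to_bps [simp]: "bcoeff (to_bps f) i j = f (i, j)"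
  by (simp add: to_bps_def)

lemma to_bps_of_bps [simp]: "to_bps (of_bps F) = F"
  by (rule bps_eqI) (simp add: of_bps_def)

lemma of_bps_to_bps [simp]: "of_bps (to_bps f) = f"
  by (auto simp: of_bps_def)

lemma to_bps_add: "to_bps (f +\<^sub>p g) = to_bps f + to_bps g"
  and to_bps_sub: "to_bps (f -\<^sub>p g) = to_bps f - to_bps g"
  and to_bps_mul: "to_bps (f *\<^sub>p g) = to_bps f * to_bps g"
  and to_bps_const: "to_bps (ps_const c) = bconst c"
  by (rule bps_eqI; simp add: ps_add_def ps_sub_def ps_mul_def ps_const_def bcoeff_mult bcoeff_bconst)+

lemma to_bps_mon: "to_bps (ps_mon c a b) = bconst c * bmonom a b"
  by (rule bps_eqI) (simp add: ps_mon_def bcoeff_bmonom)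

lemma to_bps2_inj: "to_bps2 f = to_bps2 g \<Longrightarrow> f = g"
  by (cases f; cases g) (simp, metis of_bps_to_bps)

lemma bij_to_bps: "bij to_bps"
  by (rule o_bij[of of_bps]) auto

lemma bij_of_bps: "bij of_bps"
  by (rule o_bij[of to_bps]) auto

lemma of_bps_add: "of_bps (F + G) = of_bps F +\<^sub>p of_bps G"
  and of_bps_mult: "of_bps (F * G) = of_bps F *\<^sub>p of_bps G"
  and of_bps_bconst: "of_bps (bconst c) = ps_const c"
  by (auto simp: of_bps_def ps_add_def ps_mul_def ps_const_def bcoeff_mult bcoeff_bconst)

lemma bps_aut_conj:
  assumes "is_aut \<phi>"
  shows "bps_aut (to_bps \<circ> \<phi> \<circ> of_bps)"
  using assms bij_comp[OF bij_comp[OF bij_of_bps] bij_to_bps]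
  by (auto simp: bps_aut_def is_aut_def of_bps_add of_bps_mult of_bps_bconst to_bps_add to_bps_mul
      to_bps_const comp_assoc)

lemma is_aut_conj:
  assumes "bps_aut \<Phi>"
  shows "is_aut (of_bps \<circ> \<Phi> \<circ> to_bps)"
  using assms bij_comp[OF bij_comp[OF bij_to_bps] bij_of_bps]
  by (auto simp: bps_aut_def is_aut_def of_bps_add of_bps_mult of_bps_bconst to_bps_add to_bps_mul
      to_bps_const comp_assoc)

lemma ps_unit_iff:
  fixes u :: "'a::comm_ring_1 ps2"
  shows "ps_unit u \<longleftrightarrow> to_bps u dvd 1"
proof
  assume "ps_unit u"
  then obtain v where "u *\<^sub>p v = ps_const 1" by (auto simp: ps_unit_def)
  then have "1 = to_bps u * to_bps v" by (metis to_bps_mul to_bps_const bconst_1)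
  then show "to_bps u dvd 1" by (rule dvdI)
next
  assume "to_bps u dvd 1"
  then obtain V where "1 = to_bps u * V" by (rule dvdE)
  then have "u *\<^sub>p of_bps V = ps_const 1"
    using of_bps_mult[of "to_bps u" V] of_bps_bconst[of "1::'a"] by simp
  then show "ps_unit u" by (auto simp: ps_unit_def)
qed

lemma in_GL2_iff: "in_GL2 U \<longleftrightarrow> bmat_det (map_prod to_bps2 to_bps2 U) dvd 1"
proof -
  obtain a b c d where "U = ((a, b), (c, d))" by (metis prod.exhaust)
  then show ?thesis by (simp add: in_GL2_def bmat_det_def ps_unit_iff to_bps_sub to_bps_mul)
qed

lemma to_bps2_mat_app: "to_bps2 (mat_app U f) = bmat_apply (map_prod to_bps2 to_bps2 U) (to_bps2 f)"
proof -
  obtain a b c d where "U = ((a, b), (c, d))" by (metis prod.exhaust)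
  then show ?thesis by (simp add: mat_app_def bmat_apply_def to_bps_add to_bps_mul)
qed

lemma contact_equiv_iff: "contact_equiv f g \<longleftrightarrow> bcontact_equiv (to_bps2 f) (to_bps2 g)"
proof
  assume "contact_equiv f g"
  then obtain U \<phi> where "in_GL2 U" "is_aut \<phi>" "g = mat_app U (\<phi> (fst f), \<phi> (snd f))"
    by (auto simp: contact_equiv_def)
  moreover have "to_bps2 (\<phi> (fst f), \<phi> (snd f)) = map_prod (to_bps \<circ> \<phi> \<circ> of_bps) (to_bps \<circ> \<phi> \<circ> of_bps) (to_bps2 f)"
    by (cases f) simp
  ultimately show "bcontact_equiv (to_bps2 f) (to_bps2 g)"
    unfolding bcontact_equiv_def
    by (intro exI[of _ "map_prod to_bps2 to_bps2 U"] exI[of _ "to_bps \<circ> \<phi> \<circ> of_bps"])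
      (simp add: in_GL2_iff[symmetric] bps_aut_conj to_bps2_mat_app)
next
  assume "bcontact_equiv (to_bps2 f) (to_bps2 g)"
  then obtain V \<Phi> where V: "bmat_det V dvd 1" and \<Phi>: "bps_aut \<Phi>"
    and g: "to_bps2 g = bmat_apply V (map_prod \<Phi> \<Phi> (to_bps2 f))"
    by (auto simp: bcontact_equiv_def)
  define U where "U = map_prod (map_prod of_bps of_bps) (map_prod of_bps of_bps) V"
  define \<phi> where "\<phi> = of_bps \<circ> \<Phi> \<circ> to_bps"
  have UV: "map_prod to_bps2 to_bps2 U = V" by (cases V) (auto simp: U_def)
  have "to_bps2 (mat_app U (\<phi> (fst f), \<phi> (snd f))) = to_bps2 g"
    by (cases f) (simp add: to_bps2_mat_app UV g \<phi>_def)
  then have "g = mat_app U (\<phi> (fst f), \<phi> (snd f))"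
    by (intro to_bps2_inj) simp
  moreover have "in_GL2 U" using V by (simp add: in_GL2_iff UV)
  ultimately show "contact_equiv f g"
    unfolding contact_equiv_def \<phi>_def using is_aut_conj[OF \<Phi>] by blast
qed

lemma ord_ge2_if_jet_eq:
  assumes "jet k g = jet k h"
  shows "ord_ge2 (Suc k) (to_bps2 g - to_bps2 h)"
proof -
  have "fst g (i, j) = fst h (i, j)" "snd g (i, j) = snd h (i, j)" if "i + j \<le> k" for i j
    using arg_cong[OF assms, of "\<lambda>F. fst F (i, j)"] arg_cong[OF assms, of "\<lambda>F. snd F (i, j)"] that
    by (simp_all add: jet_def ps_jet_def)
  then show ?thesis by (auto simp: ord_ge2_def ord_ge_def)
qed

lemma jet_jet: "jet k (jet k f) = jet k f"
  by (auto simp: jet_def ps_jet_def)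

lemma determined_if_bdetermined: "bdetermined k (to_bps2 h) \<Longrightarrow> determined k h"
  unfolding determined_def bdetermined_def contact_equiv_iff using ord_ge2_if_jet_eq by blast

lemma bdetermined_normal_forms:
  fixes N :: "'a::field ps2 \<times> 'a ps2"
  assumes char_2: "(2::'a) = 0"
    and "N = (ps_mon 1 3 0, ps_mon 1 0 3 +\<^sub>p ps_mon 1 2 1)
       \<or> N = (ps_mon 1 3 0, ps_mon 1 0 3)
       \<or> (\<exists>lam::'a. lam \<noteq> 1 \<and> N = (ps_mon 1 3 0 +\<^sub>p ps_mon 1 2 1, ps_mon 1 0 3 +\<^sub>p ps_mon lam 2 1))
       \<or> N = (ps_mon 1 2 1, ps_mon 1 3 0 +\<^sub>p ps_mon 1 0 3)"
  shows "bdetermined 3 (to_bps2 N)"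
  using assms(2)
proof (elim disjE exE conjE)
  assume "N = (ps_mon 1 3 0, ps_mon 1 0 3 +\<^sub>p ps_mon 1 2 1)"
  then show ?thesis using bdetermined_x3_y3_x2y[OF char_2] by (simp add: to_bps_mon to_bps_add)
next
  assume "N = (ps_mon 1 3 0, ps_mon 1 0 3)"
  then show ?thesis using bdetermined_x3_y3[OF char_2] by (simp add: to_bps_mon)
next
  fix lam assume "lam \<noteq> 1" "N = (ps_mon 1 3 0 +\<^sub>p ps_mon 1 2 1, ps_mon 1 0 3 +\<^sub>p ps_mon lam 2 1)"
  then show ?thesis using bdetermined_x3_x2y_y3_x2y[OF char_2] by (simp add: to_bps_mon to_bps_add)
next
  assume "N = (ps_mon 1 2 1, ps_mon 1 3 0 +\<^sub>p ps_mon 1 0 3)"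
  then show ?thesis using bdetermined_x2y_x3_y3[OF char_2] by (simp add: to_bps_mon to_bps_add)
qed

theorem proposition6p3:
  fixes f :: "('a::field) ps2 \<times> 'a ps2" and N :: "'a ps2 \<times> 'a ps2"
  assumes "alg_closed TYPE('a)"
    and "(2::'a) = 0"
    and "N = (ps_mon 1 3 0, ps_mon 1 0 3 +\<^sub>p ps_mon 1 2 1)
       \<or> N = (ps_mon 1 3 0, ps_mon 1 0 3)
       \<or> (\<exists>lam::'a. lam \<noteq> 1 \<and> N = (ps_mon 1 3 0 +\<^sub>p ps_mon 1 2 1, ps_mon 1 0 3 +\<^sub>p ps_mon lam 2 1))
       \<or> N = (ps_mon 1 2 1, ps_mon 1 3 0 +\<^sub>p ps_mon 1 0 3)"
    and "contact_equiv (jet 3 f) N"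
  shows "determined 3 (jet 3 f) \<and> contact_equiv f N"
proof -
  have "bdetermined 3 (to_bps2 N)"
    using assms(2,3) by (rule bdetermined_normal_forms)
  then have "bdetermined 3 (to_bps2 (jet 3 f))"
    by (rule bdetermined_contact_invariant[OF assms(4)[unfolded contact_equiv_iff]])
  then have det: "determined 3 (jet 3 f)"
    by (rule determined_if_bdetermined)
  then have "contact_equiv f (jet 3 f)"
    unfolding determined_def using jet_jet[of 3 f] by (elim allE[of _ f]) simp
  then have "contact_equiv f N"
    unfolding contact_equiv_iff using assms(4)[unfolded contact_equiv_iff] by (rule bcontact_equiv_trans)
  with det show ?thesis ..
qed

end
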